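(* Let $(M,\eta)$ be a set operad and $\mathbb K$ a field of characteristic $0$. On the polynomial algebra $\mathbb K[t_\alpha:\alpha\in\mathcal T(M)]$ define, for each type $\alpha$, $\Delta(t_\alpha)=\sum t_{\tau(a)}\otimes t_{\tau(m')}$, the sum running over all pairs $(a,m')\in M(M)[U]$ with $\eta(a,m')=m$, where $m\in M[U]$ is any structure of type $\alpha$; extend $\Delta$ multiplicatively, and let $\epsilon$ be the multiplicative map with $\epsilon(t_\alpha)=1$ if $\alpha=\bullet$ and $\epsilon(t_\alpha)=0$ otherwise. Then $\Delta(t_\alpha)$ does not depend on the choice of the representative $m$, $\Delta$ is coassociative, $\epsilon$ is a counit, and these maps make the polynomial algebra a commutative bialgebra. After identifying $t_\bullet$ with the unit $1$, it becomes a commutative Hopf algebra, the natural Hopf algebra $\mathcal N_M$.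
   Context: A species $M$ is a functor from finite sets with bijections to finite sets with maps. $M[U]$ is the set of $M$-structures on $U$. Two structures $m\in M[U]$ and $m'\in M[V]$ are isomorphic if $M[f]m=m'$ for some bijection $f:U\to V$. $\tau(m)$ denotes the isomorphism class (type) of $m$, and $\mathcal T(M)$ is the set of types. For species $M,N$ with $N[\emptyset]=\emptyset$, the substitution is $M(N)[U]=\coprod_{\pi\in\Pi[U]}\big(\prod_{B\in\pi}N[B]\big)\times M[\pi]$, where $\Pi[U]$ is the set of set partitions of $U$. Its elements are pairs $(a,m')$, with $a=\{n_B\}_{B\in\pi}$ an assembly (one $N$-structure on each block of $\pi$) and $m'\in M[\pi]$. A set operad is a species $M$ with $M[\emptyset]=\emptyset$ and $|M[U]|=1$ for $|U|=1$, together with a natural transformation $\eta:M(M)\to M$ that is associative and has the singleton structures as two-sided unit (a monoid for substitution with unit the singleton species $X$). $\bullet$ denotes the type of the singleton structure. For an assembly $a=\{m_B\}_{B\in\pi}$ of $M$-structures write $t_{\tau(a)}=\prod_{B\in\pi}t_{\tau(m_B)}$. *)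

theory Defs
  imports Main "HOL-Library.Poly_Mapping" "HOL-Library.Product_Plus" "HOL-Library.Multiset"
    "HOL-Library.Nat_Bijection" "HOL-Library.Disjoint_Sets" "HOL-Library.FuncSet"
begin

section \<open>Species (on finite subsets of nat, a skeleton-containing full subcategory of finite sets)\<close>

text \<open>Finite sets of labels that arise as
  blocks of partitions are re-encoded as natural numbers via set_encode.\<close>

definition species :: "(nat set \<Rightarrow> 's set) \<Rightarrow> ((nat \<Rightarrow> nat) \<Rightarrow> nat set \<Rightarrow> 's \<Rightarrow> 's) \<Rightarrow> bool" where
  "species M Mf \<longleftrightarrow>
     (\<forall>U. finite U \<longrightarrow> finite (M U)) \<and>
     (\<forall>U. \<not> finite U \<longrightarrow> M U = {}) \<and>
     (\<forall>f U V m. finite U \<and> bij_betw f U V \<and> m \<in> M U \<longrightarrow> Mf f U m \<in> M V) \<and>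
     (\<forall>U m. finite U \<and> m \<in> M U \<longrightarrow> Mf id U m = m) \<and>
     (\<forall>f g U V m. finite U \<and> bij_betw f U V \<and> bij_betw g V (g ` V) \<and> m \<in> M U
        \<longrightarrow> Mf (g \<circ> f) U m = Mf g V (Mf f U m)) \<and>
     (\<forall>f g U m. finite U \<and> (\<forall>x\<in>U. f x = g x) \<longrightarrow> Mf f U m = Mf g U m)"

definition tau :: "(nat set \<Rightarrow> 's set) \<Rightarrow> ((nat \<Rightarrow> nat) \<Rightarrow> nat set \<Rightarrow> 's \<Rightarrow> 's) \<Rightarrow> nat set \<Rightarrow> 's
                   \<Rightarrow> (nat set \<times> 's) set" where
  "tau M Mf U m = {(V, m'). \<exists>f. bij_betw f U V \<and> m' = Mf f U m}"

definition stypes :: "(nat set \<Rightarrow> 's set) \<Rightarrow> ((nat \<Rightarrow> nat) \<Rightarrow> nat set \<Rightarrow> 's \<Rightarrow> 's) \<Rightarrow> (nat set \<times> 's) set set" where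
  "stypes M Mf = {tau M Mf U m | U m. finite U \<and> m \<in> M U}"

definition cd :: "nat set set \<Rightarrow> nat set" where
  "cd \<pi> = set_encode ` \<pi>"

text \<open>Substitution M(N)[U]: triples (pi, a, m') with a an assembly of N-structures on the blocks.\<close>
definition subst :: "(nat set \<Rightarrow> 's set) \<Rightarrow> (nat set \<Rightarrow> 's set) \<Rightarrow> nat set
                     \<Rightarrow> (nat set set \<times> (nat set \<Rightarrow> 's) \<times> 's) set" where
  "subst M N U = {(\<pi>, a, m'). partition_on U \<pi> \<and> a \<in> Pi\<^sub>E \<pi> N \<and> m' \<in> M (cd \<pi>)}"

definition subst_transport :: "((nat \<Rightarrow> nat) \<Rightarrow> nat set \<Rightarrow> 's \<Rightarrow> 's) \<Rightarrow> (nat \<Rightarrow> nat) \<Rightarrow> nat set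
      \<Rightarrow> nat set set \<times> (nat set \<Rightarrow> 's) \<times> 's \<Rightarrow> nat set set \<times> (nat set \<Rightarrow> 's) \<times> 's" where
  "subst_transport Mf f U x = (case x of (\<pi>, a, m') \<Rightarrow>
     ((`) f ` \<pi>,
      (\<lambda>B'\<in>(`) f ` \<pi>. Mf f (U \<inter> f -` B') (a (U \<inter> f -` B'))),
      Mf (\<lambda>n. set_encode (f ` set_decode n)) (cd \<pi>) m'))"

definition unit_str :: "(nat set \<Rightarrow> 's set) \<Rightarrow> nat set \<Rightarrow> 's" where
  "unit_str M U = (THE m. m \<in> M U)"

text \<open>Set operad: eta U pi a m' is the composite eta(a, m') in M[U].\<close>
definition set_operad :: "(nat set \<Rightarrow> 's set) \<Rightarrow> ((nat \<Rightarrow> nat) \<Rightarrow> nat set \<Rightarrow> 's \<Rightarrow> 's)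
                         \<Rightarrow> (nat set \<Rightarrow> nat set set \<Rightarrow> (nat set \<Rightarrow> 's) \<Rightarrow> 's \<Rightarrow> 's) \<Rightarrow> bool" where
  "set_operad M Mf eta \<longleftrightarrow>
     species M Mf \<and> M {} = {} \<and> (\<forall>U. card U = 1 \<longrightarrow> card (M U) = 1) \<and>
     \<comment> \<open>eta : M(M) -> M\<close>
     (\<forall>U \<pi> a m'. finite U \<and> (\<pi>, a, m') \<in> subst M M U \<longrightarrow> eta U \<pi> a m' \<in> M U) \<and>
     \<comment> \<open>naturality\<close>
     (\<forall>U V f \<pi> a m'. finite U \<and> bij_betw f U V \<and> (\<pi>, a, m') \<in> subst M M U \<longrightarrow>
        (case subst_transport Mf f U (\<pi>, a, m') of (\<pi>2, a2, m2) \<Rightarrow> eta V \<pi>2 a2 m2)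
          = Mf f U (eta U \<pi> a m')) \<and>
     \<comment> \<open>associativity\<close>
     (\<forall>U \<pi> a \<sigma> b m''. finite U \<and> partition_on U \<pi> \<and> a \<in> Pi\<^sub>E \<pi> M \<and> partition_on (cd \<pi>) \<sigma>
        \<and> b \<in> Pi\<^sub>E \<sigma> M \<and> m'' \<in> M (cd \<sigma>) \<longrightarrow>
        (let \<rho> = (\<lambda>C. \<Union> (set_decode ` C)) ` \<sigma>;
             c = (\<lambda>R\<in>\<rho>. let C = (THE C. C \<in> \<sigma> \<and> \<Union> (set_decode ` C) = R)
                          in eta R (set_decode ` C) (restrict a (set_decode ` C)) (b C));
             m3 = Mf (\<lambda>n. set_encode (\<Union> (set_decode ` set_decode n))) (cd \<sigma>) m''
         in eta U \<pi> a (eta (cd \<pi>) \<sigma> b m'') = eta U \<rho> c m3)) \<and>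
     \<comment> \<open>right unit (singleton structures on the blocks)\<close>
     (\<forall>U m. finite U \<and> m \<in> M U \<longrightarrow>
        eta U ((\<lambda>u. {u}) ` U) (\<lambda>B\<in>(\<lambda>u. {u}) ` U. unit_str M B)
            (Mf (\<lambda>u. set_encode {u}) U m) = m) \<and>
     \<comment> \<open>left unit (singleton structure on the set of blocks)\<close>
     (\<forall>U m. finite U \<and> m \<in> M U \<longrightarrow>
        eta U {U} (\<lambda>B\<in>{U}. m) (unit_str M {set_encode U}) = m)"

definition bullet :: "(nat set \<Rightarrow> 's set) \<Rightarrow> ((nat \<Rightarrow> nat) \<Rightarrow> nat set \<Rightarrow> 's \<Rightarrow> 's) \<Rightarrow> (nat set \<times> 's) set" where
  "bullet M Mf = tau M Mf {0} (unit_str M {0})"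

section \<open>Polynomial algebra K[t_alpha] as finitely supported functions on monomials (multisets)\<close>

text \<open>The polynomial algebra K[t_alpha : alpha in T] is ('t multiset =>0 'k) restricted to
  monomials over T; its tensor square is ('t multiset x 't multiset =>0 'k) (basis: pairs of
  monomials) with the componentwise product, i.e. the tensor product algebra.\<close>

definition smult_pm :: "'k::comm_ring_1 \<Rightarrow> ('a \<Rightarrow>\<^sub>0 'k) \<Rightarrow> ('a \<Rightarrow>\<^sub>0 'k)" where
  "smult_pm c p = Poly_Mapping.map ((*) c) p"

definition lin_ext :: "('a \<Rightarrow> ('b \<Rightarrow>\<^sub>0 'k::comm_ring_1)) \<Rightarrow> ('a \<Rightarrow>\<^sub>0 'k) \<Rightarrow> ('b \<Rightarrow>\<^sub>0 'k)" where
  "lin_ext f p = (\<Sum>x\<in>Poly_Mapping.keys p. smult_pm (Poly_Mapping.lookup p x) (f x))"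

definition ptens :: "('a \<Rightarrow>\<^sub>0 'k::comm_ring_1) \<Rightarrow> ('b \<Rightarrow>\<^sub>0 'k) \<Rightarrow> ('a \<times> 'b \<Rightarrow>\<^sub>0 'k)" where
  "ptens p q = (\<Sum>x\<in>Poly_Mapping.keys p. \<Sum>y\<in>Poly_Mapping.keys q. Poly_Mapping.single (x, y) (Poly_Mapping.lookup p x * Poly_Mapping.lookup q y))"

definition monomials_over :: "'t set \<Rightarrow> 't multiset set" where
  "monomials_over T = {\<mu>. set_mset \<mu> \<subseteq> T}"

definition DeltaRep :: "(nat set \<Rightarrow> 's set) \<Rightarrow> ((nat \<Rightarrow> nat) \<Rightarrow> nat set \<Rightarrow> 's \<Rightarrow> 's)
     \<Rightarrow> (nat set \<Rightarrow> nat set set \<Rightarrow> (nat set \<Rightarrow> 's) \<Rightarrow> 's \<Rightarrow> 's) \<Rightarrow> nat set \<Rightarrow> 's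
     \<Rightarrow> ((nat set \<times> 's) set multiset \<times> (nat set \<times> 's) set multiset \<Rightarrow>\<^sub>0 'k::comm_ring_1)" where
  "DeltaRep M Mf eta U m =
     (\<Sum>x\<in>{(\<pi>, a, m') \<in> subst M M U. eta U \<pi> a m' = m}.
        case x of (\<pi>, a, m') \<Rightarrow>
          Poly_Mapping.single (image_mset (\<lambda>B. tau M Mf B (a B)) (mset_set \<pi>),
                               {# tau M Mf (cd \<pi>) m' #}) 1)"

definition DeltaGen :: "(nat set \<Rightarrow> 's set) \<Rightarrow> ((nat \<Rightarrow> nat) \<Rightarrow> nat set \<Rightarrow> 's \<Rightarrow> 's)
     \<Rightarrow> (nat set \<Rightarrow> nat set set \<Rightarrow> (nat set \<Rightarrow> 's) \<Rightarrow> 's \<Rightarrow> 's) \<Rightarrow> (nat set \<times> 's) set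
     \<Rightarrow> ((nat set \<times> 's) set multiset \<times> (nat set \<times> 's) set multiset \<Rightarrow>\<^sub>0 'k::comm_ring_1)" where
  "DeltaGen M Mf eta \<alpha> = (let r = (SOME r. r \<in> \<alpha>) in DeltaRep M Mf eta (fst r) (snd r))"

definition Delta :: "(nat set \<Rightarrow> 's set) \<Rightarrow> ((nat \<Rightarrow> nat) \<Rightarrow> nat set \<Rightarrow> 's \<Rightarrow> 's)
     \<Rightarrow> (nat set \<Rightarrow> nat set set \<Rightarrow> (nat set \<Rightarrow> 's) \<Rightarrow> 's \<Rightarrow> 's)
     \<Rightarrow> ((nat set \<times> 's) set multiset \<Rightarrow>\<^sub>0 'k::comm_ring_1)
     \<Rightarrow> ((nat set \<times> 's) set multiset \<times> (nat set \<times> 's) set multiset \<Rightarrow>\<^sub>0 'k)" where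
  "Delta M Mf eta = lin_ext (\<lambda>\<mu>. prod_mset (image_mset (DeltaGen M Mf eta) \<mu>))"

definition eps :: "(nat set \<Rightarrow> 's set) \<Rightarrow> ((nat \<Rightarrow> nat) \<Rightarrow> nat set \<Rightarrow> 's \<Rightarrow> 's)
     \<Rightarrow> ((nat set \<times> 's) set multiset \<Rightarrow>\<^sub>0 'k::comm_ring_1) \<Rightarrow> 'k" where
  "eps M Mf p = (\<Sum>\<mu>\<in>Poly_Mapping.keys p. Poly_Mapping.lookup p \<mu> * (if set_mset \<mu> \<subseteq> {bullet M Mf} then 1 else 0))"

section \<open>Bialgebras and Hopf algebras on the subalgebra spanned by a set B of monomials\<close>

definition bialgebra_on :: "'t multiset set \<Rightarrow> (('t multiset \<Rightarrow>\<^sub>0 'k::comm_ring_1) \<Rightarrow> ('t multiset \<times> 't multiset \<Rightarrow>\<^sub>0 'k))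
     \<Rightarrow> (('t multiset \<Rightarrow>\<^sub>0 'k) \<Rightarrow> 'k) \<Rightarrow> bool" where
  "bialgebra_on B D e \<longleftrightarrow>
     (let A = {p. Poly_Mapping.keys p \<subseteq> B} in
     0 \<in> B \<and> (\<forall>x\<in>B. \<forall>y\<in>B. x + y \<in> B) \<and>
     (\<forall>p\<in>A. Poly_Mapping.keys (D p) \<subseteq> B \<times> B) \<and>
     (\<forall>p\<in>A. \<forall>q\<in>A. D (p + q) = D p + D q \<and> D (p * q) = D p * D q) \<and>
     (\<forall>c. \<forall>p\<in>A. D (smult_pm c p) = smult_pm c (D p)) \<and> D 1 = 1 \<and>
     (\<forall>p\<in>A. \<forall>q\<in>A. e (p + q) = e p + e q \<and> e (p * q) = e p * e q) \<and>
     (\<forall>c. \<forall>p\<in>A. e (smult_pm c p) = c * e p) \<and> e 1 = 1 \<and>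
     \<comment> \<open>coassociativity: (D (x) id) o D = (id (x) D) o D, up to reassociation of the triple tensor\<close>
     (\<forall>p\<in>A. \<forall>x y z.
        Poly_Mapping.lookup (lin_ext (\<lambda>(x, y). ptens (D (Poly_Mapping.single x 1)) (Poly_Mapping.single y 1)) (D p)) ((x, y), z)
      = Poly_Mapping.lookup (lin_ext (\<lambda>(x, y). ptens (Poly_Mapping.single x 1) (D (Poly_Mapping.single y 1))) (D p)) (x, (y, z))) \<and>
     \<comment> \<open>counit\<close>
     (\<forall>p\<in>A. lin_ext (\<lambda>(x, y). smult_pm (e (Poly_Mapping.single x 1)) (Poly_Mapping.single y 1)) (D p) = p) \<and>
     (\<forall>p\<in>A. lin_ext (\<lambda>(x, y). smult_pm (e (Poly_Mapping.single y 1)) (Poly_Mapping.single x 1)) (D p) = p))"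

definition hopf_on :: "'t multiset set \<Rightarrow> (('t multiset \<Rightarrow>\<^sub>0 'k::comm_ring_1) \<Rightarrow> ('t multiset \<times> 't multiset \<Rightarrow>\<^sub>0 'k))
     \<Rightarrow> (('t multiset \<Rightarrow>\<^sub>0 'k) \<Rightarrow> 'k) \<Rightarrow> bool" where
  "hopf_on B D e \<longleftrightarrow> bialgebra_on B D e \<and>
     (let A = {p. Poly_Mapping.keys p \<subseteq> B} in
      \<exists>S. (\<forall>p\<in>A. Poly_Mapping.keys (S p) \<subseteq> B) \<and>
          (\<forall>p\<in>A. \<forall>q\<in>A. S (p + q) = S p + S q) \<and> (\<forall>c. \<forall>p\<in>A. S (smult_pm c p) = smult_pm c (S p)) \<and>
          (\<forall>p\<in>A. lin_ext (\<lambda>(x, y). S (Poly_Mapping.single x 1) * Poly_Mapping.single y 1) (D p) = smult_pm (e p) 1) \<and>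
          (\<forall>p\<in>A. lin_ext (\<lambda>(x, y). Poly_Mapping.single x 1 * S (Poly_Mapping.single y 1)) (D p) = smult_pm (e p) 1))"

section \<open>Identifying t_bullet with 1\<close>

text \<open>The quotient map K[t_alpha] -> K[t_alpha]/(t_bullet - 1) = K[t_alpha : alpha /= bullet]:
  delete all occurrences of bullet from each monomial.\<close>
definition qmap :: "'t \<Rightarrow> ('t multiset \<Rightarrow>\<^sub>0 'k::comm_ring_1) \<Rightarrow> ('t multiset \<Rightarrow>\<^sub>0 'k)" where
  "qmap b = lin_ext (\<lambda>\<mu>. Poly_Mapping.single (filter_mset (\<lambda>\<alpha>. \<alpha> \<noteq> b) \<mu>) 1)"

definition qtens :: "'t \<Rightarrow> ('t multiset \<times> 't multiset \<Rightarrow>\<^sub>0 'k::comm_ring_1) \<Rightarrow> ('t multiset \<times> 't multiset \<Rightarrow>\<^sub>0 'k)" where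
  "qtens b = lin_ext (\<lambda>(\<mu>, \<nu>). Poly_Mapping.single (filter_mset (\<lambda>\<alpha>. \<alpha> \<noteq> b) \<mu>, filter_mset (\<lambda>\<alpha>. \<alpha> \<noteq> b) \<nu>) 1)"

end

theory Submission
  imports Defs
begin

text \<open>\<open>Delta t\<^sub>\<alpha>\<close> is a sum over the fibre of \<open>eta\<close> above a representative \<open>m\<close> of \<open>\<alpha>\<close>; the
  naturality of \<open>eta\<close> transports the fibre along bijections, so the sum only depends on \<open>\<alpha>\<close>.
  Both \<open>(Delta \<otimes> id) Delta t\<^sub>\<alpha>\<close> and \<open>(id \<otimes> Delta) Delta t\<^sub>\<alpha>\<close> are sums over ways of decomposing
  \<open>m\<close> twice (first \<open>m\<close>, then either every piece of the assembly or the top structure), and the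
  associativity of \<open>eta\<close> matches the two index sets bijectively by merging or splitting blocks.
  The unit laws say that the decomposition into singletons and the trivial decomposition are the
  only terms surviving the counit. After setting \<open>t\<^sub>\<bullet> = 1\<close> the bialgebra is graded by
  \<open>|U| - 1\<close> and connected, so Takeuchi's series \<open>\<Sum>\<^sub>n (\<eta>\<epsilon> - id)\<^sup>*\<^sup>n\<close> is finite in each degree
  and is the antipode.\<close>

section \<open>Linear algebra of finitely supported functions\<close>

lemma lookup_smult_pm [simp]: "Poly_Mapping.lookup (smult_pm c p) x = c * Poly_Mapping.lookup p x"
  by (simp add: smult_pm_def Poly_Mapping.map.rep_eq when_def)

lemma smult_pm_0 [simp]: "smult_pm 0 p = 0"
  and smult_pm_0_right [simp]: "smult_pm c 0 = 0"
  and smult_pm_1 [simp]: "smult_pm 1 p = p"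
  by (auto intro!: poly_mapping_eqI)

lemma smult_pm_add: "smult_pm c (p + q) = smult_pm c p + smult_pm c q"
  and smult_pm_diff: "smult_pm c (p - q) = smult_pm c p - smult_pm c q"
  and smult_pm_add_left: "smult_pm (c + d) p = smult_pm c p + smult_pm d p"
  and smult_pm_smult [simp]: "smult_pm c (smult_pm d p) = smult_pm (c * d) p"
  by (auto intro!: poly_mapping_eqI simp: lookup_add lookup_minus algebra_simps)

lemma smult_pm_sum: "smult_pm c (sum f I) = (\<Sum>i\<in>I. smult_pm c (f i))"
  by (induction I rule: infinite_finite_induct) (auto simp: smult_pm_add)

lemma smult_pm_single [simp]: "smult_pm c (Poly_Mapping.single x d) = Poly_Mapping.single x (c * d)"
  by (auto intro!: poly_mapping_eqI simp: lookup_single when_def)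

lemma smult_pm_eq_mult: "smult_pm c (p :: 'a::monoid_add \<Rightarrow>\<^sub>0 'k::comm_ring_1) = Poly_Mapping.single 0 c * p"
  by (simp add: smult_pm_def mult_map_scale_conv_mult)

lemma smult_pm_mult:
  fixes p q :: "'a::comm_monoid_add \<Rightarrow>\<^sub>0 'k::comm_ring_1"
  shows "smult_pm c p * smult_pm d q = smult_pm (c * d) (p * q)"
  by (simp add: smult_pm_eq_mult mult_single algebra_simps flip: mult_single[of 0 c 0 d, simplified])

lemma smult_pm_mult_left:
  fixes p q :: "'a::comm_monoid_add \<Rightarrow>\<^sub>0 'k::comm_ring_1"
  shows "smult_pm c p * q = smult_pm c (p * q)"
  by (simp add: smult_pm_eq_mult algebra_simps)

lemma smult_pm_mult_right:
  fixes p q :: "'a::comm_monoid_add \<Rightarrow>\<^sub>0 'k::comm_ring_1"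
  shows "p * smult_pm c q = smult_pm c (p * q)"
  by (simp add: smult_pm_eq_mult algebra_simps)

lemma sum_single: "(\<Sum>x\<in>A. Poly_Mapping.single k (f x)) = Poly_Mapping.single k (\<Sum>x\<in>A. f x)"
  by (induction A rule: infinite_finite_induct) (auto simp: single_add)

lemma single_add_1: "Poly_Mapping.single (a + b) (1::'k::comm_ring_1) = Poly_Mapping.single a 1 * Poly_Mapping.single b 1"
  by (simp add: mult_single)

lemma prod_single:
  "(\<Prod>x\<in>A. Poly_Mapping.single (k x) (1::'k::comm_ring_1)) = Poly_Mapping.single (\<Sum>x\<in>A. k x :: 'a::comm_monoid_add) 1"
  by (induction A rule: infinite_finite_induct) (auto simp: mult_single)

lemma poly_mapping_eq_sum_single:
  assumes "finite S" "Poly_Mapping.keys p \<subseteq> S"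
  shows "p = (\<Sum>x\<in>S. Poly_Mapping.single x (Poly_Mapping.lookup p x))"
proof (rule poly_mapping_eqI)
  fix k
  have "(\<Sum>x\<in>S. Poly_Mapping.lookup (Poly_Mapping.single x (Poly_Mapping.lookup p x)) k)
      = (\<Sum>x\<in>S. if x = k then Poly_Mapping.lookup p k else 0)"
    by (intro sum.cong) (auto simp: lookup_single when_def)
  also have "\<dots> = Poly_Mapping.lookup p k"
    using assms by (auto simp: in_keys_iff)
  finally show "Poly_Mapping.lookup p k = Poly_Mapping.lookup (\<Sum>x\<in>S. Poly_Mapping.single x (Poly_Mapping.lookup p x)) k"
    by (simp add: lookup_sum)
qed

lemma poly_mapping_eq_sum_single_keys:
  "p = (\<Sum>x\<in>Poly_Mapping.keys p. Poly_Mapping.single x (Poly_Mapping.lookup p x))"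
  by (rule poly_mapping_eq_sum_single) auto

lemma lin_ext_superset:
  assumes "finite S" "Poly_Mapping.keys p \<subseteq> S"
  shows "lin_ext f p = (\<Sum>x\<in>S. smult_pm (Poly_Mapping.lookup p x) (f x))"
  unfolding lin_ext_def using assms
  by (intro sum.mono_neutral_left) (auto simp: in_keys_iff)

lemma lin_ext_0 [simp]: "lin_ext f 0 = 0"
  by (simp add: lin_ext_def)

lemma lin_ext_single [simp]: "lin_ext f (Poly_Mapping.single x c) = smult_pm c (f x)"
  by (subst lin_ext_superset[of "{x}"]) auto

lemma lin_ext_add: "lin_ext f (p + q) = lin_ext f p + lin_ext f q"
  by (simp add: lin_ext_superset[of "Poly_Mapping.keys p \<union> Poly_Mapping.keys q"] keys_add
      lookup_add smult_pm_add_left sum.distrib)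

lemma lin_ext_smult: "lin_ext f (smult_pm c p) = smult_pm c (lin_ext f p)"
proof -
  have "Poly_Mapping.keys (smult_pm c p) \<subseteq> Poly_Mapping.keys p"
    by (auto simp: in_keys_iff)
  then show ?thesis
    by (simp add: lin_ext_superset[of "Poly_Mapping.keys p"] smult_pm_sum)
qed

lemma lin_ext_sum: "lin_ext f (sum g I) = (\<Sum>i\<in>I. lin_ext f (g i))"
  by (induction I rule: infinite_finite_induct) (auto simp: lin_ext_add)

lemma lin_ext_cong: "(\<And>x. x \<in> Poly_Mapping.keys p \<Longrightarrow> f x = g x) \<Longrightarrow> lin_ext f p = lin_ext g p"
  by (simp add: lin_ext_def)

lemma lin_ext_eq_0: "(\<And>x. x \<in> Poly_Mapping.keys p \<Longrightarrow> f x = 0) \<Longrightarrow> lin_ext f p = 0"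
  by (simp add: lin_ext_def)

lemma lin_ext_fun_0 [simp]: "lin_ext (\<lambda>x. 0) p = 0"
  by (simp add: lin_ext_def)

lemma lin_ext_fun_add: "lin_ext (\<lambda>x. f x + g x) p = lin_ext f p + lin_ext g p"
  by (simp add: lin_ext_def smult_pm_add sum.distrib)

lemma lin_ext_fun_diff: "lin_ext (\<lambda>x. f x - g x) p = lin_ext f p - lin_ext g p"
  by (simp add: lin_ext_def smult_pm_diff sum_subtractf)

lemma lin_ext_fun_sum: "lin_ext (\<lambda>x. \<Sum>i\<in>I. f i x) p = (\<Sum>i\<in>I. lin_ext (f i) p)"
  by (induction I rule: infinite_finite_induct) (auto simp: lin_ext_fun_add)

lemma lin_ext_fun_smult: "lin_ext (\<lambda>x. smult_pm c (f x)) p = smult_pm c (lin_ext f p)"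
  by (simp add: lin_ext_def smult_pm_sum mult.commute)

lemma lin_ext_fun_mult_right:
  "lin_ext (\<lambda>x. f x * c) p = lin_ext f p * (c :: 'b::comm_monoid_add \<Rightarrow>\<^sub>0 'k::comm_ring_1)"
  by (simp add: lin_ext_def sum_distrib_right smult_pm_mult_left)

lemma lin_ext_fun_mult_left:
  "lin_ext (\<lambda>x. c * f x) p = c * lin_ext f p" for c :: "'b::comm_monoid_add \<Rightarrow>\<^sub>0 'k::comm_ring_1"
  by (simp add: lin_ext_def sum_distrib_left smult_pm_mult_right)

lemma lin_ext_id: "lin_ext (\<lambda>x. Poly_Mapping.single x 1) p = p"
  by (subst (2) poly_mapping_eq_sum_single_keys) (simp add: lin_ext_def)

lemma lin_ext_single_const: "lin_ext (\<lambda>x. Poly_Mapping.single k (f x)) p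
  = Poly_Mapping.single k (\<Sum>x\<in>Poly_Mapping.keys p. Poly_Mapping.lookup p x * f x)"
  by (simp add: lin_ext_def sum_single)

lemma keys_lin_ext: "Poly_Mapping.keys (lin_ext f p) \<subseteq> (\<Union>x\<in>Poly_Mapping.keys p. Poly_Mapping.keys (f x))"
proof -
  have "Poly_Mapping.keys (lin_ext f p)
      \<subseteq> (\<Union>x\<in>Poly_Mapping.keys p. Poly_Mapping.keys (smult_pm (Poly_Mapping.lookup p x) (f x)))"
    unfolding lin_ext_def by (rule keys_sum)
  also have "\<dots> \<subseteq> (\<Union>x\<in>Poly_Mapping.keys p. Poly_Mapping.keys (f x))"
    by (intro UN_mono) (auto simp: in_keys_iff)
  finally show ?thesis .
qed

lemma lin_ext_compose: "lin_ext g (lin_ext f p) = lin_ext (\<lambda>x. lin_ext g (f x)) p"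
  unfolding lin_ext_def[of f p] lin_ext_def[of "\<lambda>x. lin_ext g (f x)" p]
  by (simp add: lin_ext_sum lin_ext_smult)

lemma lin_ext_mult:
  fixes f :: "'a::comm_monoid_add \<Rightarrow> ('b::comm_monoid_add \<Rightarrow>\<^sub>0 'k::comm_ring_1)"
  assumes "\<And>x y. x \<in> Poly_Mapping.keys p \<Longrightarrow> y \<in> Poly_Mapping.keys q \<Longrightarrow> f (x + y) = f x * f y"
  shows "lin_ext f (p * q) = lin_ext f p * lin_ext f q"
proof -
  let ?P = "Poly_Mapping.keys p" and ?Q = "Poly_Mapping.keys q"
  have "p * q = (\<Sum>x\<in>?P. \<Sum>y\<in>?Q. Poly_Mapping.single (x + y) (Poly_Mapping.lookup p x * Poly_Mapping.lookup q y))"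
    by (subst poly_mapping_eq_sum_single_keys[of p], subst poly_mapping_eq_sum_single_keys[of q])
      (simp add: sum_product mult_single)
  then have "lin_ext f (p * q)
      = (\<Sum>x\<in>?P. \<Sum>y\<in>?Q. smult_pm (Poly_Mapping.lookup p x * Poly_Mapping.lookup q y) (f (x + y)))"
    by (simp add: lin_ext_sum)
  also have "\<dots> = (\<Sum>x\<in>?P. \<Sum>y\<in>?Q. smult_pm (Poly_Mapping.lookup p x) (f x) * smult_pm (Poly_Mapping.lookup q y) (f y))"
    by (intro sum.cong refl) (simp add: assms smult_pm_mult)
  also have "\<dots> = lin_ext f p * lin_ext f q"
    by (simp add: lin_ext_def sum_product)
  finally show ?thesis .
qed

lemma keys_mult_subset:
  "Poly_Mapping.keys X \<subseteq> A \<Longrightarrow> Poly_Mapping.keys Y \<subseteq> B \<Longrightarrow> Poly_Mapping.keys (X * Y) \<subseteq> {x + y | x y. x \<in> A \<and> y \<in> B}"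
  using keys_mult[of X Y] by blast

definition push_keys :: "('a \<Rightarrow> 'b) \<Rightarrow> ('a \<Rightarrow>\<^sub>0 'k::comm_ring_1) \<Rightarrow> ('b \<Rightarrow>\<^sub>0 'k)" where
  "push_keys h = lin_ext (\<lambda>x. Poly_Mapping.single (h x) 1)"

lemma push_keys_single [simp]: "push_keys h (Poly_Mapping.single x c) = Poly_Mapping.single (h x) c"
  by (simp add: push_keys_def)

lemma push_keys_0 [simp]: "push_keys h 0 = 0"
  by (simp add: push_keys_def)

lemma push_keys_add: "push_keys h (p + q) = push_keys h p + push_keys h q"
  by (simp add: push_keys_def lin_ext_add)

lemma push_keys_sum: "push_keys h (sum g I) = (\<Sum>i\<in>I. push_keys h (g i))"
  by (simp add: push_keys_def lin_ext_sum)

lemma push_keys_smult: "push_keys h (smult_pm c p) = smult_pm c (push_keys h p)"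
  by (simp add: push_keys_def lin_ext_smult)

lemma lin_ext_push_keys: "lin_ext g (push_keys h p) = lin_ext (\<lambda>x. g (h x)) p"
  by (simp add: push_keys_def lin_ext_compose)

lemma push_keys_lin_ext: "push_keys h (lin_ext g p) = lin_ext (\<lambda>x. push_keys h (g x)) p"
  by (simp add: push_keys_def lin_ext_compose)

lemma push_keys_push_keys: "push_keys h (push_keys g p) = push_keys (h \<circ> g) p"
  by (simp add: push_keys_def lin_ext_compose)

lemma lookup_push_keys_inj: "inj h \<Longrightarrow> Poly_Mapping.lookup (push_keys h p) (h x) = Poly_Mapping.lookup p x"
  unfolding push_keys_def lin_ext_def lookup_sum
  by (simp add: lookup_single when_def inj_eq in_keys_iff)

lemma push_keys_mult:
  fixes h :: "'a::comm_monoid_add \<Rightarrow> 'b::comm_monoid_add"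
  assumes "\<And>x y. h (x + y) = h x + h y"
  shows "push_keys h (p * q :: 'a \<Rightarrow>\<^sub>0 'k::comm_ring_1) = push_keys h p * push_keys h q"
  unfolding push_keys_def by (rule lin_ext_mult) (simp add: assms mult_single)

lemma push_keys_1:
  fixes h :: "'a::comm_monoid_add \<Rightarrow> 'b::comm_monoid_add"
  assumes "h 0 = 0"
  shows "push_keys h (1 :: 'a \<Rightarrow>\<^sub>0 'k::comm_ring_1) = 1"
  using assms by (simp flip: single_one)

lemma keys_push_keys: "Poly_Mapping.keys (push_keys h p) \<subseteq> h ` Poly_Mapping.keys p"
  using keys_lin_ext[of "\<lambda>x. Poly_Mapping.single (h x) 1" p] by (auto simp: push_keys_def)

lemma ptens_lin_ext: "ptens p q = lin_ext (\<lambda>x. lin_ext (\<lambda>y. Poly_Mapping.single (x, y) 1) q) p"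
  by (simp add: ptens_def lin_ext_def smult_pm_sum)

lemma ptens_single [simp]:
  "ptens (Poly_Mapping.single x a) (Poly_Mapping.single y b) = Poly_Mapping.single (x, y) (a * b)"
  by (simp add: ptens_lin_ext)

lemma ptens_sum_left: "ptens (sum f I) q = (\<Sum>i\<in>I. ptens (f i) q)"
  and ptens_sum_right: "ptens p (sum g I) = (\<Sum>i\<in>I. ptens p (g i))"
  by (simp_all add: ptens_lin_ext lin_ext_sum lin_ext_fun_sum)

lemma ptens_eq_mult:
  fixes p :: "'a::comm_monoid_add \<Rightarrow>\<^sub>0 'k::comm_ring_1" and q :: "'b::comm_monoid_add \<Rightarrow>\<^sub>0 'k"
  shows "ptens p q = push_keys (\<lambda>x. (x, 0)) p * push_keys (\<lambda>y. (0, y)) q"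
proof -
  have "ptens p q = lin_ext (\<lambda>x. lin_ext (\<lambda>y. Poly_Mapping.single (x, 0) 1 * Poly_Mapping.single (0, y) 1) q) p"
    unfolding ptens_lin_ext by (simp add: mult_single)
  also have "\<dots> = lin_ext (\<lambda>x. Poly_Mapping.single (x, 0) 1 * push_keys (\<lambda>y. (0, y)) q) p"
    by (simp add: push_keys_def lin_ext_def smult_pm_mult_right sum_distrib_left mult_single)
  also have "\<dots> = push_keys (\<lambda>x. (x, 0)) p * push_keys (\<lambda>y. (0, y)) q"
    by (simp add: push_keys_def lin_ext_def sum_distrib_right flip: smult_pm_mult_left)
  finally show ?thesis .
qed

lemma ptens_mult:
  fixes p p' :: "'a::comm_monoid_add \<Rightarrow>\<^sub>0 'k::comm_ring_1" and q q' :: "'b::comm_monoid_add \<Rightarrow>\<^sub>0 'k"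
  shows "ptens (p * p') (q * q') = ptens p q * ptens p' q'"
  by (simp add: ptens_eq_mult push_keys_mult algebra_simps)

lemma ptens_1 [simp]: "ptens (1 :: 'a::comm_monoid_add \<Rightarrow>\<^sub>0 'k::comm_ring_1) (1 :: 'b::comm_monoid_add \<Rightarrow>\<^sub>0 'k) = 1"
  by (simp flip: single_one add: zero_prod_def)

lemma ptens_push_keys: "ptens (push_keys h p) (push_keys g q) = push_keys (\<lambda>(x, y). (h x, g y)) (ptens p q)"
  by (simp add: ptens_lin_ext push_keys_def lin_ext_compose lin_ext_smult lin_ext_fun_smult)

lemma lin_ext_ptens: "lin_ext F (ptens p q) = lin_ext (\<lambda>x. lin_ext (\<lambda>y. F (x, y)) q) p"
  by (simp add: ptens_lin_ext lin_ext_compose)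

definition comul_left :: "(('a \<Rightarrow>\<^sub>0 'k::comm_ring_1) \<Rightarrow> ('a \<times> 'a \<Rightarrow>\<^sub>0 'k)) \<Rightarrow> ('a \<times> 'a \<Rightarrow>\<^sub>0 'k)
    \<Rightarrow> (('a \<times> 'a) \<times> 'a \<Rightarrow>\<^sub>0 'k)" where
  "comul_left D X = lin_ext (\<lambda>(x, y). ptens (D (Poly_Mapping.single x 1)) (Poly_Mapping.single y 1)) X"

definition comul_right :: "(('a \<Rightarrow>\<^sub>0 'k::comm_ring_1) \<Rightarrow> ('a \<times> 'a \<Rightarrow>\<^sub>0 'k)) \<Rightarrow> ('a \<times> 'a \<Rightarrow>\<^sub>0 'k)
    \<Rightarrow> ('a \<times> 'a \<times> 'a \<Rightarrow>\<^sub>0 'k)" where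
  "comul_right D X = lin_ext (\<lambda>(x, y). ptens (Poly_Mapping.single x 1) (D (Poly_Mapping.single y 1))) X"

definition reassoc :: "('a \<times> 'b) \<times> 'c \<Rightarrow> 'a \<times> 'b \<times> 'c" where
  "reassoc t = (fst (fst t), snd (fst t), snd t)"

lemma reassoc_add: "reassoc (x + y) = reassoc x + reassoc y"
  by (simp add: reassoc_def)

lemma reassoc_0: "reassoc 0 = 0"
  by (simp add: reassoc_def zero_prod_def)

lemma inj_reassoc: "inj reassoc"
  by (auto intro!: injI simp: reassoc_def prod_eq_iff)

lemma lookup_comul_left_right:
  assumes "push_keys reassoc (comul_left D X) = comul_right D X"
  shows "Poly_Mapping.lookup (comul_left D X) ((x, y), z) = Poly_Mapping.lookup (comul_right D X) (x, y, z)"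
  using lookup_push_keys_inj[OF inj_reassoc, of "comul_left D X" "((x, y), z)"]
  by (simp add: assms reassoc_def)

context
  fixes D :: "('a::comm_monoid_add \<Rightarrow>\<^sub>0 'k::comm_ring_1) \<Rightarrow> ('a \<times> 'a \<Rightarrow>\<^sub>0 'k)"
  assumes D_mult: "\<And>p q. D (p * q) = D p * D q"
    and D_1: "D 1 = 1"
begin

lemma comul_left_mult: "comul_left D (X * Y) = comul_left D X * comul_left D Y"
  unfolding comul_left_def by (rule lin_ext_mult) (auto simp: single_add_1 D_mult ptens_mult)

lemma comul_right_mult: "comul_right D (X * Y) = comul_right D X * comul_right D Y"
  unfolding comul_right_def by (rule lin_ext_mult) (auto simp: single_add_1 D_mult ptens_mult)

lemma comul_left_1: "comul_left D 1 = 1"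
proof -
  have "comul_left D (Poly_Mapping.single (0, 0) 1) = 1"
    using D_1 by (simp add: comul_left_def)
  then show ?thesis
    by (metis single_one zero_prod_def)
qed

lemma comul_right_1: "comul_right D 1 = 1"
proof -
  have "comul_right D (Poly_Mapping.single (0, 0) 1) = 1"
    using D_1 by (simp add: comul_right_def)
  then show ?thesis
    by (metis single_one zero_prod_def)
qed

end

text \<open>Linear maps are given by their values on the basis elements.\<close>
definition convolution :: "(('a \<Rightarrow>\<^sub>0 'k::comm_ring_1) \<Rightarrow> ('a \<times> 'a \<Rightarrow>\<^sub>0 'k))
    \<Rightarrow> ('a \<Rightarrow> ('b::comm_monoid_add \<Rightarrow>\<^sub>0 'k)) \<Rightarrow> ('a \<Rightarrow> ('b \<Rightarrow>\<^sub>0 'k)) \<Rightarrow> 'a \<Rightarrow> ('b \<Rightarrow>\<^sub>0 'k)" where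
  "convolution D F G \<mu> = lin_ext (\<lambda>(x, y). F x * G y) (D (Poly_Mapping.single \<mu> 1))"

lemma convolution_sum_left: "convolution D (\<lambda>x. \<Sum>n\<in>N. F n x) G \<mu> = (\<Sum>n\<in>N. convolution D (F n) G \<mu>)"
  unfolding convolution_def by (simp add: sum_distrib_right split_def lin_ext_fun_sum)

lemma convolution_sum_right: "convolution D F (\<lambda>x. \<Sum>n\<in>N. G n x) \<mu> = (\<Sum>n\<in>N. convolution D F (G n) \<mu>)"
  unfolding convolution_def by (simp add: sum_distrib_left split_def lin_ext_fun_sum)

lemma convolution_diff_left: "convolution D (\<lambda>x. F x - F' x) G \<mu> = convolution D F G \<mu> - convolution D F' G \<mu>"
  and convolution_diff_right: "convolution D F (\<lambda>x. G x - G' x) \<mu> = convolution D F G \<mu> - convolution D F G' \<mu>"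
  unfolding convolution_def by (simp_all add: algebra_simps split_def lin_ext_fun_diff)

lemma convolution_convolution_left:
  "convolution D (convolution D F G) H \<mu>
     = lin_ext (\<lambda>((a, b), c). F a * G b * H c) (comul_left D (D (Poly_Mapping.single \<mu> 1)))"
  unfolding comul_left_def convolution_def lin_ext_compose
  by (intro lin_ext_cong) (auto simp: lin_ext_ptens split_def simp flip: lin_ext_fun_mult_right)

lemma convolution_convolution_right:
  "convolution D F (convolution D G H) \<mu>
     = lin_ext (\<lambda>(a, b, c). F a * (G b * H c)) (comul_right D (D (Poly_Mapping.single \<mu> 1)))"
  unfolding comul_right_def convolution_def lin_ext_compose
  by (intro lin_ext_cong) (auto simp: lin_ext_ptens split_def simp flip: lin_ext_fun_mult_left)

lemma convolution_assoc:
  assumes "push_keys reassoc (comul_left D (D (Poly_Mapping.single \<mu> 1))) = comul_right D (D (Poly_Mapping.single \<mu> 1))"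
  shows "convolution D (convolution D F G) H \<mu> = convolution D F (convolution D G H) \<mu>"
  unfolding convolution_convolution_left convolution_convolution_right assms[symmetric] lin_ext_push_keys
  by (intro lin_ext_cong) (auto simp: reassoc_def mult.assoc)

section \<open>Set operads\<close>

lemma partition_on_finite:
  assumes "finite U" "partition_on U \<pi>"
  shows "finite \<pi>" "\<And>B. B \<in> \<pi> \<Longrightarrow> finite B"
  using assms finite_elements[OF assms] by (auto intro: finite_subset simp: partition_on_def)

lemma inj_on_set_encode: "(\<And>B. B \<in> \<pi> \<Longrightarrow> finite B) \<Longrightarrow> inj_on set_encode \<pi>"
  by (auto intro!: inj_onI simp: set_encode_eq)

lemma set_decode_cd: "(\<And>B. B \<in> \<pi> \<Longrightarrow> finite B) \<Longrightarrow> set_decode ` cd \<pi> = \<pi>"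
  unfolding cd_def by (force simp: image_image)

lemma cd_set_decode: "cd (set_decode ` C) = C"
  unfolding cd_def by (simp add: image_image)

lemma finite_cd: "finite \<pi> \<Longrightarrow> finite (cd \<pi>)"
  by (simp add: cd_def)

lemma card_cd: "(\<And>B. B \<in> \<pi> \<Longrightarrow> finite B) \<Longrightarrow> card (cd \<pi>) = card \<pi>"
  unfolding cd_def by (rule card_image[OF inj_on_set_encode])

lemma restrict_PiE_eq: "f \<in> Pi\<^sub>E A B \<Longrightarrow> (\<And>x. x \<in> A \<Longrightarrow> f x = g x) \<Longrightarrow> f = restrict g A"
  by (auto simp: PiE_def extensional_def fun_eq_iff)

type_synonym 's mon = "(nat set \<times> 's) set multiset"
type_synonym 's decomp = "nat set set \<times> (nat set \<Rightarrow> 's) \<times> 's"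

locale operad =
  fixes M :: "nat set \<Rightarrow> 's set"
    and Mf :: "(nat \<Rightarrow> nat) \<Rightarrow> nat set \<Rightarrow> 's \<Rightarrow> 's"
    and eta :: "nat set \<Rightarrow> nat set set \<Rightarrow> (nat set \<Rightarrow> 's) \<Rightarrow> 's \<Rightarrow> 's"
  assumes set_operad: "set_operad M Mf eta"
begin

lemma species: "species M Mf"
  using set_operad unfolding set_operad_def by (elim conjE)

lemma finite_structures: "finite U \<Longrightarrow> finite (M U)"
  using species unfolding species_def by (elim conjE) (simp only:)

lemma transport_in: "finite U \<Longrightarrow> bij_betw f U V \<Longrightarrow> m \<in> M U \<Longrightarrow> Mf f U m \<in> M V"
  using species unfolding species_def by (elim conjE) (simp only:)

lemma transport_id: "finite U \<Longrightarrow> m \<in> M U \<Longrightarrow> Mf id U m = m"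
  using species unfolding species_def by (elim conjE) (simp only:)

lemma transport_comp: "finite U \<Longrightarrow> bij_betw f U V \<Longrightarrow> bij_betw g V (g ` V) \<Longrightarrow> m \<in> M U
    \<Longrightarrow> Mf (g \<circ> f) U m = Mf g V (Mf f U m)"
  using species unfolding species_def by (elim conjE) (simp only:)

lemma transport_cong: "finite U \<Longrightarrow> (\<And>x. x \<in> U \<Longrightarrow> f x = g x) \<Longrightarrow> Mf f U m = Mf g U m"
  using species unfolding species_def by (elim conjE) simp

lemma no_structures_empty: "M {} = {}"
  using set_operad unfolding set_operad_def by (elim conjE) (simp only:)

lemma card_structures_singleton: "card U = 1 \<Longrightarrow> card (M U) = 1"
  using set_operad unfolding set_operad_def by (elim conjE) (simp only:)

lemma eta_in: "finite U \<Longrightarrow> (\<pi>, a, m') \<in> subst M M U \<Longrightarrow> eta U \<pi> a m' \<in> M U"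
  using set_operad unfolding set_operad_def by (elim conjE) (simp only:)

lemma eta_natural: "finite U \<Longrightarrow> bij_betw f U V \<Longrightarrow> (\<pi>, a, m') \<in> subst M M U \<Longrightarrow>
    (case subst_transport Mf f U (\<pi>, a, m') of (\<pi>2, a2, m2) \<Rightarrow> eta V \<pi>2 a2 m2) = Mf f U (eta U \<pi> a m')"
  using set_operad unfolding set_operad_def by (elim conjE) (simp only:)

lemma eta_unit_right: "finite U \<Longrightarrow> m \<in> M U \<Longrightarrow>
    eta U ((\<lambda>u. {u}) ` U) (\<lambda>B\<in>(\<lambda>u. {u}) ` U. unit_str M B) (Mf (\<lambda>u. set_encode {u}) U m) = m"
  using set_operad unfolding set_operad_def by (elim conjE) (simp only:)

lemma eta_unit_left: "finite U \<Longrightarrow> m \<in> M U \<Longrightarrow> eta U {U} (\<lambda>B\<in>{U}. m) (unit_str M {set_encode U}) = m"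
  using set_operad unfolding set_operad_def by (elim conjE) (simp only:)

lemma transport_inv:
  assumes U: "finite U" and f: "bij_betw f U V" and m: "m \<in> M U"
  shows "Mf (inv_into U f) V (Mf f U m) = m"
proof -
  have "bij_betw (inv_into U f) V U" using f by (rule bij_betw_inv_into)
  then have g: "bij_betw (inv_into U f) V (inv_into U f ` V)" by (simp add: bij_betw_def)
  have "Mf (inv_into U f) V (Mf f U m) = Mf (inv_into U f \<circ> f) U m"
    using transport_comp[OF U f g m] by simp
  also have "\<dots> = Mf id U m"
    using f by (intro transport_cong[OF U]) (auto simp: bij_betw_def)
  finally show ?thesis using transport_id[OF U m] by simp
qed

lemma transport_inv':
  assumes V: "finite V" and f: "bij_betw f V W" and m: "m \<in> M W"
  shows "Mf f V (Mf (inv_into V f) W m) = m"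
proof -
  have W: "finite W" using bij_betw_finite[OF f] V by simp
  have g: "bij_betw (inv_into V f) W V" by (rule bij_betw_inv_into[OF f])
  have "Mf (inv_into W (inv_into V f)) V x = Mf f V x" for x
  proof (rule transport_cong[OF V])
    fix u assume u: "u \<in> V"
    then show "inv_into W (inv_into V f) u = f u"
      using g f by (intro inv_into_f_eq) (auto simp: bij_betw_def)
  qed
  then show ?thesis using transport_inv[OF W g m] by simp
qed

lemma tau_self_mem: "finite U \<Longrightarrow> m \<in> M U \<Longrightarrow> (U, m) \<in> tau M Mf U m"
  unfolding tau_def using transport_id[of U m] by (auto intro!: exI[of _ id])

lemma tau_transport:
  assumes U: "finite U" and f: "bij_betw f U V" and m: "m \<in> M U"
  shows "tau M Mf V (Mf f U m) = tau M Mf U m"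
proof
  show "tau M Mf V (Mf f U m) \<subseteq> tau M Mf U m"
  proof
    fix x assume "x \<in> tau M Mf V (Mf f U m)"
    then obtain W g where x: "x = (W, Mf g V (Mf f U m))" and g: "bij_betw g V W"
      unfolding tau_def by auto
    have "Mf g V (Mf f U m) = Mf (g \<circ> f) U m"
      using transport_comp[OF U f _ m] g by (simp add: bij_betw_def)
    moreover have "bij_betw (g \<circ> f) U W" using f g by (rule bij_betw_trans)
    ultimately show "x \<in> tau M Mf U m" unfolding tau_def x by auto
  qed
next
  show "tau M Mf U m \<subseteq> tau M Mf V (Mf f U m)"
  proof
    fix x assume "x \<in> tau M Mf U m"
    then obtain W h where x: "x = (W, Mf h U m)" and h: "bij_betw h U W"
      unfolding tau_def by auto
    define g where "g = h \<circ> inv_into U f"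
    have g: "bij_betw g V W" unfolding g_def
      using bij_betw_inv_into[OF f] h by (rule bij_betw_trans)
    have "Mf g V (Mf f U m) = Mf (g \<circ> f) U m"
      using transport_comp[OF U f _ m] g by (simp add: bij_betw_def)
    also have "\<dots> = Mf h U m"
      using f by (intro transport_cong[OF U]) (auto simp: g_def bij_betw_def)
    finally show "x \<in> tau M Mf V (Mf f U m)" unfolding tau_def x using g by auto
  qed
qed

lemma tau_memD:
  assumes U: "finite U" and m: "m \<in> M U" and mem: "(V, m') \<in> tau M Mf U m"
  obtains f where "bij_betw f U V" "m' = Mf f U m" "finite V" "m' \<in> M V"
    "tau M Mf V m' = tau M Mf U m" "card V = card U"
proof -
  obtain f where f: "bij_betw f U V" and m': "m' = Mf f U m"
    using mem unfolding tau_def by auto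
  show thesis
    using that[OF f m'] bij_betw_finite[OF f] U transport_in[OF U f m] tau_transport[OF U f m]
      bij_betw_same_card[OF f] m' by simp
qed

lemma unit_str_in: "card B = 1 \<Longrightarrow> unit_str M B \<in> M B"
  using card_structures_singleton[of B] by (auto simp: unit_str_def card_1_singleton_iff)

lemma unit_str_unique: "card B = 1 \<Longrightarrow> s \<in> M B \<Longrightarrow> s = unit_str M B"
  using card_structures_singleton[of B] by (auto simp: unit_str_def card_1_singleton_iff)

lemma tau_eq_bullet_iff:
  assumes B: "finite B" and s: "s \<in> M B"
  shows "tau M Mf B s = bullet M Mf \<longleftrightarrow> card B = 1"
proof
  assume "tau M Mf B s = bullet M Mf"
  then have "(B, s) \<in> tau M Mf {0} (unit_str M {0})"
    using tau_self_mem[OF B s] by (simp add: bullet_def)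
  then obtain f where "bij_betw f {0::nat} B" unfolding tau_def by auto
  from bij_betw_same_card[OF this] show "card B = 1" by simp
next
  assume "card B = 1"
  then obtain u where Bu: "B = {u}" by (rule card_1_singletonE)
  have f: "bij_betw (\<lambda>_. 0::nat) B {0}" unfolding Bu by (simp add: bij_betw_def)
  have "Mf (\<lambda>_. 0) B s = unit_str M {0}"
    using transport_in[OF B f s] by (intro unit_str_unique) simp_all
  then show "tau M Mf B s = bullet M Mf"
    using tau_transport[OF B f s] by (simp add: bullet_def)
qed

section \<open>Decompositions and the well-definedness of \<open>Delta\<close>\<close>

definition decomps :: "nat set \<Rightarrow> 's \<Rightarrow> 's decomp set" where
  "decomps U m = {(\<pi>, a, m') \<in> subst M M U. eta U \<pi> a m' = m}"

definition decomp_key :: "'s decomp \<Rightarrow> 's mon \<times> 's mon" where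
  "decomp_key x = (case x of (\<pi>, a, m') \<Rightarrow>
     (image_mset (\<lambda>B. tau M Mf B (a B)) (mset_set \<pi>), {# tau M Mf (cd \<pi>) m' #}))"

lemma DeltaRep_eq: "DeltaRep M Mf eta U m = (\<Sum>x\<in>decomps U m. Poly_Mapping.single (decomp_key x) 1)"
  unfolding DeltaRep_def decomps_def decomp_key_def by (intro sum.cong) auto

lemma substD:
  assumes "(\<pi>, a, m') \<in> subst M M U"
  shows "partition_on U \<pi>" "a \<in> Pi\<^sub>E \<pi> M" "m' \<in> M (cd \<pi>)"
  using assms unfolding subst_def by auto

lemma mem_decomps_iff: "(\<pi>, a, m') \<in> decomps U m \<longleftrightarrow> (\<pi>, a, m') \<in> subst M M U \<and> eta U \<pi> a m' = m"
  unfolding decomps_def by auto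

lemma finite_subst:
  assumes U: "finite U"
  shows "finite (subst M M U)"
proof (rule finite_subset)
  show "subst M M U \<subseteq> Sigma {\<pi>. partition_on U \<pi>} (\<lambda>\<pi>. Pi\<^sub>E \<pi> M \<times> M (cd \<pi>))"
    unfolding subst_def by auto
  show "finite (Sigma {\<pi>. partition_on U \<pi>} (\<lambda>\<pi>. Pi\<^sub>E \<pi> M \<times> M (cd \<pi>)))"
    using U partition_on_finite[OF U] finitely_many_partition_on[OF U]
    by (intro finite_SigmaI finite_cartesian_product finite_PiE finite_structures finite_cd) auto
qed

lemma finite_decomps: "finite U \<Longrightarrow> finite (decomps U m)"
  unfolding decomps_def by (rule finite_subset[OF _ finite_subst]) auto

lemma bij_betw_transport_cd:
  assumes U: "finite U" and f: "inj_on f U" and p: "partition_on U \<pi>"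
  shows "bij_betw (\<lambda>n. set_encode (f ` set_decode n)) (cd \<pi>) (cd ((`) f ` \<pi>))"
proof (rule bij_betw_imageI)
  note fin = partition_on_finite(2)[OF U p]
  have sub: "B \<in> \<pi> \<Longrightarrow> B \<subseteq> U" for B using p by (auto simp: partition_on_def)
  show "inj_on (\<lambda>n. set_encode (f ` set_decode n)) (cd \<pi>)"
  proof (rule inj_onI)
    fix x y assume "x \<in> cd \<pi>" "y \<in> cd \<pi>" and eq: "set_encode (f ` set_decode x) = set_encode (f ` set_decode y)"
    then obtain B C where B: "B \<in> \<pi>" "x = set_encode B" and C: "C \<in> \<pi>" "y = set_encode C"
      unfolding cd_def by auto
    have "f ` B = f ` C" using eq B C fin[OF B(1)] fin[OF C(1)] by (simp add: set_encode_eq)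
    then show "x = y" using f sub[OF B(1)] sub[OF C(1)] B C by (simp add: inj_on_image_eq_iff)
  qed
  show "(\<lambda>n. set_encode (f ` set_decode n)) ` cd \<pi> = cd ((`) f ` \<pi>)"
    unfolding cd_def using fin by (auto simp: image_image)
qed

lemma partition_on_transport:
  assumes f: "bij_betw f U V" and p: "partition_on U \<pi>"
  shows "partition_on V ((`) f ` \<pi>)"
proof -
  have "partition_on (f ` U) ((`) f ` \<pi> - {{}})"
    using p f by (intro partition_on_inj_image) (auto simp: bij_betw_def)
  moreover have "(`) f ` \<pi> - {{}} = (`) f ` \<pi>" using p by (auto simp: partition_on_def)
  ultimately show ?thesis using f by (simp add: bij_betw_def)
qed

context
  fixes U V :: "nat set" and f :: "nat \<Rightarrow> nat" and \<pi> :: "nat set set"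
    and a :: "nat set \<Rightarrow> 's" and m' :: 's
  assumes U: "finite U" and f: "bij_betw f U V" and x: "(\<pi>, a, m') \<in> subst M M U"
begin

private lemma blocks: "partition_on U \<pi>" "a \<in> Pi\<^sub>E \<pi> M" "m' \<in> M (cd \<pi>)"
  "finite \<pi>" "B \<in> \<pi> \<Longrightarrow> finite B" "B \<in> \<pi> \<Longrightarrow> B \<subseteq> U" "finite (cd \<pi>)"
  using substD[OF x] partition_on_finite[OF U] by (auto simp: partition_on_def finite_cd)

private lemma bij_betw_block: "B \<in> \<pi> \<Longrightarrow> bij_betw f B (f ` B)"
  using f blocks(6) by (auto intro: inj_on_subset simp: bij_betw_def)

private abbreviation "code_map \<equiv> \<lambda>n. set_encode (f ` set_decode n)"

private abbreviation "a' \<equiv> \<lambda>B'\<in>(`) f ` \<pi>. Mf f (U \<inter> f -` B') (a (U \<inter> f -` B'))"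

private lemma subst_transport_eq:
  "subst_transport Mf f U (\<pi>, a, m') = ((`) f ` \<pi>, a', Mf code_map (cd \<pi>) m')"
  unfolding subst_transport_def by simp

private lemma transported_block: "B \<in> \<pi> \<Longrightarrow> a' (f ` B) = Mf f B (a B)"
proof -
  assume B: "B \<in> \<pi>"
  then have "U \<inter> f -` (f ` B) = B" using f blocks(6) by (auto simp: bij_betw_def inj_on_def)
  then show ?thesis using B by auto
qed

private lemma bij_betw_code_map: "bij_betw code_map (cd \<pi>) (cd ((`) f ` \<pi>))"
  using U f blocks(1) by (intro bij_betw_transport_cd) (auto simp: bij_betw_def)

lemma subst_transport_in_subst: "subst_transport Mf f U (\<pi>, a, m') \<in> subst M M V"
proof -
  have "a' \<in> Pi\<^sub>E ((`) f ` \<pi>) M"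
    using transported_block transport_in[OF blocks(5) bij_betw_block] blocks(2) by (auto simp: PiE_iff)
  moreover have "Mf code_map (cd \<pi>) m' \<in> M (cd ((`) f ` \<pi>))"
    by (rule transport_in[OF blocks(7) bij_betw_code_map blocks(3)])
  ultimately show ?thesis
    unfolding subst_transport_eq subst_def using partition_on_transport[OF f blocks(1)] by auto
qed

lemma decomp_key_subst_transport: "decomp_key (subst_transport Mf f U (\<pi>, a, m')) = decomp_key (\<pi>, a, m')"
proof -
  have inj: "inj_on ((`) f) \<pi>"
    using f blocks(6) by (auto intro!: inj_onI simp: inj_on_image_eq_iff bij_betw_def)
  have "image_mset (\<lambda>B. tau M Mf B (a' B)) (mset_set ((`) f ` \<pi>))
      = image_mset (\<lambda>B. tau M Mf (f ` B) (a' (f ` B))) (mset_set \<pi>)"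
    by (simp add: image_mset_mset_set[OF inj, symmetric] multiset.map_comp comp_def)
  also have "\<dots> = image_mset (\<lambda>B. tau M Mf B (a B)) (mset_set \<pi>)"
    using transported_block tau_transport[OF blocks(5) bij_betw_block] blocks(2,4)
    by (intro image_mset_cong) auto
  finally show ?thesis
    unfolding subst_transport_eq decomp_key_def
    using tau_transport[OF blocks(7) bij_betw_code_map blocks(3)] by simp
qed

lemma subst_transport_inverse:
  "subst_transport Mf (inv_into U f) V (subst_transport Mf f U (\<pi>, a, m')) = (\<pi>, a, m')"
proof -
  define g where "g = inv_into U f"
  have gf: "u \<in> U \<Longrightarrow> g (f u) = u" for u unfolding g_def using f by (simp add: bij_betw_def)
  have gfB: "B \<in> \<pi> \<Longrightarrow> g ` f ` B = B" for B using gf blocks(6) by (force simp: image_image)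
  have blocks_back: "(`) g ` (`) f ` \<pi> = \<pi>" using gfB by (force simp: image_image)
  have preimage: "B \<in> \<pi> \<Longrightarrow> V \<inter> g -` B = f ` B" for B
    using f blocks(6) gf by (auto simp: bij_betw_def)
  have assembly_back: "(\<lambda>B\<in>\<pi>. Mf g (V \<inter> g -` B) (a' (V \<inter> g -` B))) = a"
  proof
    fix B
    show "(\<lambda>B\<in>\<pi>. Mf g (V \<inter> g -` B) (a' (V \<inter> g -` B))) B = a B"
    proof (cases "B \<in> \<pi>")
      case True
      have "Mf g (f ` B) (Mf f B (a B)) = Mf (inv_into B f) (f ` B) (Mf f B (a B))"
        using blocks(5)[OF True] bij_betw_block[OF True] gf blocks(6)[OF True]
        by (intro transport_cong) (auto simp: bij_betw_def)
      then show ?thesis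
        using True preimage transported_block transport_inv[OF blocks(5) bij_betw_block] blocks(2)
        by (auto simp: PiE_iff)
    qed (use blocks(2) in auto)
  qed
  have "Mf (\<lambda>n. set_encode (g ` set_decode n)) (cd ((`) f ` \<pi>)) (Mf code_map (cd \<pi>) m')
      = Mf ((\<lambda>n. set_encode (g ` set_decode n)) \<circ> code_map) (cd \<pi>) m'"
    using blocks_back bij_betw_transport_cd[of V g "(`) f ` \<pi>"] bij_betw_finite[OF f] U
      partition_on_transport[OF f blocks(1)] bij_betw_inv_into[OF f]
    by (intro transport_comp[OF blocks(7) bij_betw_code_map _ blocks(3), symmetric])
      (auto simp: g_def bij_betw_def)
  also have "\<dots> = Mf id (cd \<pi>) m'"
    using gfB blocks(5) by (intro transport_cong[OF blocks(7)]) (auto simp: cd_def)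
  finally have code_back: "Mf (\<lambda>n. set_encode (g ` set_decode n)) (cd ((`) f ` \<pi>)) (Mf code_map (cd \<pi>) m') = m'"
    using transport_id[OF blocks(7) blocks(3)] by simp
  have "subst_transport Mf g V ((`) f ` \<pi>, a', Mf code_map (cd \<pi>) m')
      = (\<pi>, (\<lambda>B\<in>\<pi>. Mf g (V \<inter> g -` B) (a' (V \<inter> g -` B))),
         Mf (\<lambda>n. set_encode (g ` set_decode n)) (cd ((`) f ` \<pi>)) (Mf code_map (cd \<pi>) m'))"
    unfolding subst_transport_def by (simp only: blocks_back prod.case)
  then show ?thesis
    unfolding g_def[symmetric] subst_transport_eq assembly_back code_back .
qed

end

lemma subst_transport_cong:
  assumes U: "finite U" and x: "(\<pi>, a, m') \<in> subst M M U" and fg: "\<And>u. u \<in> U \<Longrightarrow> f u = f' u"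
  shows "subst_transport Mf f U (\<pi>, a, m') = subst_transport Mf f' U (\<pi>, a, m')"
proof -
  note p = substD(1)[OF x]
  have img: "B \<in> \<pi> \<Longrightarrow> f ` B = f' ` B" for B
    using fg p by (auto simp: partition_on_def intro!: image_cong)
  then have "(`) f ` \<pi> = (`) f' ` \<pi>" by (auto simp: image_iff)
  moreover have "U \<inter> f -` B' = U \<inter> f' -` B'" for B' using fg by auto
  moreover have "Mf f (U \<inter> f' -` B') y = Mf f' (U \<inter> f' -` B') y" for B' y
    using U fg by (intro transport_cong) auto
  moreover have "Mf (\<lambda>n. set_encode (f ` set_decode n)) (cd \<pi>) m'
      = Mf (\<lambda>n. set_encode (f' ` set_decode n)) (cd \<pi>) m'"
    using img partition_on_finite[OF U p]
    by (intro transport_cong finite_cd) (auto simp: cd_def)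
  ultimately show ?thesis unfolding subst_transport_def prod.case by simp
qed

lemma subst_transport_decomps:
  assumes U: "finite U" and f: "bij_betw f U V" and x: "x \<in> decomps U m"
  shows "subst_transport Mf f U x \<in> decomps V (Mf f U m)"
proof -
  obtain \<pi> a m' where xe: "x = (\<pi>, a, m')" by (cases x)
  have xs: "(\<pi>, a, m') \<in> subst M M U" and e: "eta U \<pi> a m' = m"
    using x xe mem_decomps_iff by auto
  obtain \<pi>2 a2 m2 where te: "subst_transport Mf f U (\<pi>, a, m') = (\<pi>2, a2, m2)"
    by (cases "subst_transport Mf f U (\<pi>, a, m')")
  show ?thesis
    using eta_natural[OF U f xs] e subst_transport_in_subst[OF U f xs]
    unfolding xe te mem_decomps_iff by simp
qed

lemma DeltaRep_transport:
  assumes U: "finite U" and f: "bij_betw f U V" and m: "m \<in> M U"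
  shows "DeltaRep M Mf eta V (Mf f U m) = DeltaRep M Mf eta U m"
  unfolding DeltaRep_eq
proof (rule sum.reindex_bij_witness[where i = "subst_transport Mf f U" and j = "subst_transport Mf (inv_into U f) V"])
  let ?g = "inv_into U f"
  have V: "finite V" using bij_betw_finite[OF f] U by simp
  have g: "bij_betw ?g V U" by (rule bij_betw_inv_into[OF f])
  have f_eq: "u \<in> U \<Longrightarrow> inv_into V ?g u = f u" for u
    using f g by (intro inv_into_f_eq) (auto simp: bij_betw_def)
  fix x assume x: "x \<in> decomps V (Mf f U m)"
  obtain \<pi> a m' where xe: "x = (\<pi>, a, m')" by (cases x)
  have xs: "(\<pi>, a, m') \<in> subst M M V" using x xe mem_decomps_iff by auto
  obtain \<pi>2 a2 m2 where ye: "subst_transport Mf ?g V x = (\<pi>2, a2, m2)"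
    by (cases "subst_transport Mf ?g V x")
  have ys: "(\<pi>2, a2, m2) \<in> subst M M U"
    using subst_transport_in_subst[OF V g xs] xe ye by simp
  show "subst_transport Mf f U (subst_transport Mf ?g V x) = x"
    using subst_transport_cong[OF U ys f_eq] subst_transport_inverse[OF V g xs] xe ye by simp
  show "subst_transport Mf ?g V x \<in> decomps U m"
    using subst_transport_decomps[OF V g x] transport_inv[OF U f m] by simp
  show "Poly_Mapping.single (decomp_key (subst_transport Mf ?g V x)) 1 = Poly_Mapping.single (decomp_key x) 1"
    using decomp_key_subst_transport[OF V g xs] xe by simp
next
  fix x assume x: "x \<in> decomps U m"
  then show "subst_transport Mf (inv_into U f) V (subst_transport Mf f U x) = x"
    using subst_transport_inverse[OF U f] by (cases x) (auto simp: mem_decomps_iff)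
  show "subst_transport Mf f U x \<in> decomps V (Mf f U m)"
    by (rule subst_transport_decomps[OF U f x])
qed

lemma DeltaRep_tau_eq:
  assumes "finite U" "m \<in> M U" "(V, m') \<in> tau M Mf U m"
  shows "DeltaRep M Mf eta V m' = DeltaRep M Mf eta U m"
  by (rule tau_memD[OF assms]) (simp add: DeltaRep_transport[OF assms(1) _ assms(2)])

lemma DeltaGen_tau:
  assumes U: "finite U" and m: "m \<in> M U"
  shows "DeltaGen M Mf eta (tau M Mf U m) = DeltaRep M Mf eta U m"
proof -
  let ?r = "SOME r. r \<in> tau M Mf U m"
  have "?r \<in> tau M Mf U m" using tau_self_mem[OF U m] by (rule someI)
  then obtain V m' where r: "?r = (V, m')" "(V, m') \<in> tau M Mf U m" by (cases ?r) auto
  obtain f where "bij_betw f U V" "m' = Mf f U m" by (rule tau_memD[OF U m r(2)])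
  then show ?thesis unfolding DeltaGen_def Let_def r(1) using DeltaRep_transport[OF U _ m] by simp
qed

end

section \<open>Partitions of partitions\<close>

lemma image_mset_mset_set_eq_sum: "image_mset g (mset_set A) = (\<Sum>x\<in>A. {# g x #})"
  by (induction A rule: infinite_finite_induct) auto

lemma partition_on_blocks:
  assumes "partition_on U \<pi>" "B \<in> \<pi>"
  shows "B \<subseteq> U" "B \<noteq> {}"
  using assms unfolding partition_on_def by auto

lemma partition_on_card_1:
  assumes p: "partition_on U \<pi>" and c: "\<And>B. B \<in> \<pi> \<Longrightarrow> card B = 1"
  shows "\<pi> = (\<lambda>u. {u}) ` U"
proof
  show "\<pi> \<subseteq> (\<lambda>u. {u}) ` U"
  proof
    fix B assume B: "B \<in> \<pi>"
    then obtain u where "B = {u}" using c by (meson card_1_singletonE)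
    then show "B \<in> (\<lambda>u. {u}) ` U" using partition_on_blocks[OF p B] by auto
  qed
  show "(\<lambda>u. {u}) ` U \<subseteq> \<pi>"
  proof
    fix B assume "B \<in> (\<lambda>u. {u}) ` U"
    then obtain u where u: "u \<in> U" "B = {u}" by auto
    then obtain B' where B': "B' \<in> \<pi>" "u \<in> B'" using p by (auto simp: partition_on_def)
    then obtain v where "B' = {v}" using c by (meson card_1_singletonE)
    then show "B \<in> \<pi>" using B' u by auto
  qed
qed

lemma bij_betw_singleton_code: "bij_betw (\<lambda>u. set_encode {u}) U (cd ((\<lambda>u. {u}) ` U))"
  unfolding cd_def image_image by (rule inj_on_imp_bij_betw) (auto intro!: inj_onI simp: set_encode_eq)

text \<open>A partition \<open>\<sigma>\<close> of the encoded blocks \<open>cd \<pi>\<close> of a partition \<open>\<pi>\<close> of \<open>U\<close> groups the blocks;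
  \<open>merge C\<close> is the union of the blocks in the group \<open>C\<close>.\<close>
definition merge :: "nat set \<Rightarrow> nat set" where "merge C = \<Union> (set_decode ` C)"
definition merge_code :: "nat \<Rightarrow> nat" where "merge_code n = set_encode (merge (set_decode n))"

definition merge_inv :: "nat set set \<Rightarrow> nat set \<Rightarrow> nat set" where
  "merge_inv \<sigma> R = (THE C. C \<in> \<sigma> \<and> merge C = R)"

lemma inj_set_decode: "inj set_decode"
  by (metis injI set_decode_inverse)

context
  fixes U :: "nat set" and \<pi> \<sigma> :: "nat set set"
  assumes U: "finite U" and p: "partition_on U \<pi>" and s: "partition_on (cd \<pi>) \<sigma>"
begin

lemma nested_blocks: "finite \<pi>" "B \<in> \<pi> \<Longrightarrow> finite B" "B \<in> \<pi> \<Longrightarrow> B \<subseteq> U" "B \<in> \<pi> \<Longrightarrow> B \<noteq> {}"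
  using partition_on_finite[OF U p] partition_on_blocks[OF p] by auto

lemma finite_cd_blocks: "finite (cd \<pi>)" using nested_blocks(1) by (rule finite_cd)

lemma nested_groups: "finite \<sigma>" "C \<in> \<sigma> \<Longrightarrow> finite C" "C \<in> \<sigma> \<Longrightarrow> C \<subseteq> cd \<pi>" "C \<in> \<sigma> \<Longrightarrow> C \<noteq> {}"
  using partition_on_finite[OF finite_cd_blocks s] partition_on_blocks[OF s] by auto

lemma decoded_group_subset: "C \<in> \<sigma> \<Longrightarrow> set_decode ` C \<subseteq> \<pi>"
  using nested_groups(3) set_decode_cd[OF nested_blocks(2)] by blast

lemma blocks_eq_UN_groups: "\<pi> = (\<Union>C\<in>\<sigma>. set_decode ` C)"
proof -
  have "\<Union> \<sigma> = cd \<pi>" using s by (simp add: partition_on_def)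
  then have "(\<Union>C\<in>\<sigma>. set_decode ` C) = set_decode ` cd \<pi>" by blast
  then show ?thesis using set_decode_cd[OF nested_blocks(2)] by simp
qed

lemma groups_disjoint: "C \<in> \<sigma> \<Longrightarrow> C' \<in> \<sigma> \<Longrightarrow> C \<noteq> C' \<Longrightarrow> C \<inter> C' = {}"
  using s unfolding partition_on_def disjoint_def by blast

lemma decoded_groups_disjoint: "C \<in> \<sigma> \<Longrightarrow> C' \<in> \<sigma> \<Longrightarrow> C \<noteq> C' \<Longrightarrow> set_decode ` C \<inter> set_decode ` C' = {}"
  using groups_disjoint[of C C'] by (simp add: image_Int[OF inj_set_decode, symmetric])

lemma blocks_disjoint: "B \<in> \<pi> \<Longrightarrow> B' \<in> \<pi> \<Longrightarrow> B \<noteq> B' \<Longrightarrow> B \<inter> B' = {}"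
  using p unfolding partition_on_def disjoint_def by blast

lemma merge_subset: "C \<in> \<sigma> \<Longrightarrow> merge C \<subseteq> U"
proof
  fix x assume C: "C \<in> \<sigma>" and "x \<in> merge C"
  then obtain n where n: "n \<in> C" "x \<in> set_decode n" unfolding merge_def by auto
  have "set_decode n \<in> \<pi>" using decoded_group_subset[OF C] n(1) by auto
  then show "x \<in> U" using nested_blocks(3) n(2) by auto
qed

lemma merge_nonempty: "C \<in> \<sigma> \<Longrightarrow> merge C \<noteq> {}"
proof -
  assume C: "C \<in> \<sigma>"
  obtain n where n: "n \<in> C" using nested_groups(4)[OF C] by auto
  have B: "set_decode n \<in> \<pi>" using decoded_group_subset[OF C] n by auto
  then obtain x where "x \<in> set_decode n" using nested_blocks(4)[OF B] by auto
  then show "merge C \<noteq> {}" using n unfolding merge_def by auto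
qed

lemma finite_merge: "C \<in> \<sigma> \<Longrightarrow> finite (merge C)"
  using merge_subset U finite_subset by blast

lemma merge_disjoint:
  assumes C: "C \<in> \<sigma>" and C': "C' \<in> \<sigma>" and ne: "C \<noteq> C'"
  shows "merge C \<inter> merge C' = {}"
proof (rule ccontr)
  assume "merge C \<inter> merge C' \<noteq> {}"
  then obtain x n n' where n: "n \<in> C" "x \<in> set_decode n" and n': "n' \<in> C'" "x \<in> set_decode n'"
    unfolding merge_def by auto
  have B: "set_decode n \<in> \<pi>" using decoded_group_subset[OF C] n by auto
  have B': "set_decode n' \<in> \<pi>" using decoded_group_subset[OF C'] n' by auto
  have "set_decode n = set_decode n'" using blocks_disjoint[OF B B'] n n' by auto
  then have "n = n'" using inj_set_decode by (auto dest: injD)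
  then show False using groups_disjoint[OF C C' ne] n n' by auto
qed

lemma inj_on_merge: "inj_on merge \<sigma>"
proof (rule inj_onI)
  fix C C' assume C: "C \<in> \<sigma>" and C': "C' \<in> \<sigma>" and e: "merge C = merge C'"
  show "C = C'"
  proof (rule ccontr)
    assume "C \<noteq> C'"
    then have "merge C \<inter> merge C' = {}" by (rule merge_disjoint[OF C C'])
    then show False using e merge_nonempty[OF C] by auto
  qed
qed

lemma partition_on_merge: "partition_on U (merge ` \<sigma>)"
proof (rule partition_onI)
  have "\<Union> (merge ` \<sigma>) = \<Union> (\<Union>C\<in>\<sigma>. set_decode ` C)" by (auto simp: merge_def)
  also have "\<dots> = \<Union> \<pi>" using blocks_eq_UN_groups by simp
  also have "\<dots> = U" using p by (simp add: partition_on_def)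
  finally show "\<Union> (merge ` \<sigma>) = U" .
  show "{} \<notin> merge ` \<sigma>" using merge_nonempty by auto
  fix R R' assume "R \<in> merge ` \<sigma>" "R' \<in> merge ` \<sigma>" "R \<noteq> R'"
  then obtain C C' where "C \<in> \<sigma>" "C' \<in> \<sigma>" "R = merge C" "R' = merge C'" "C \<noteq> C'" by auto
  then show "disjnt R R'" using merge_disjoint by (auto simp: disjnt_def)
qed

lemma partition_on_merge_group: "C \<in> \<sigma> \<Longrightarrow> partition_on (merge C) (set_decode ` C)"
proof (rule partition_onI)
  assume C: "C \<in> \<sigma>"
  show "\<Union> (set_decode ` C) = merge C" by (simp add: merge_def)
  show "{} \<notin> set_decode ` C"
  proof
    assume "{} \<in> set_decode ` C"
    then have "{} \<in> \<pi>" using decoded_group_subset[OF C] by auto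
    then show False using nested_blocks(4) by auto
  qed
  fix B B' assume "B \<in> set_decode ` C" "B' \<in> set_decode ` C" "B \<noteq> B'"
  then have "B \<in> \<pi>" "B' \<in> \<pi>" "B \<noteq> B'" using decoded_group_subset[OF C] by auto
  then show "disjnt B B'" using blocks_disjoint by (auto simp: disjnt_def)
qed

lemma merge_inv_merge: "C \<in> \<sigma> \<Longrightarrow> merge_inv \<sigma> (merge C) = C"
  unfolding merge_inv_def
proof (rule the_equality)
  assume C: "C \<in> \<sigma>"
  show "C \<in> \<sigma> \<and> merge C = merge C" using C by simp
  fix C' assume "C' \<in> \<sigma> \<and> merge C' = merge C"
  then have "C' \<in> \<sigma>" "merge C' = merge C" by auto
  then show "C' = C" using inj_on_merge C by (auto dest: inj_onD)
qed

lemma merge_code_set_encode: "C \<in> \<sigma> \<Longrightarrow> merge_code (set_encode C) = set_encode (merge C)"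
  using nested_groups(2) by (simp add: merge_code_def merge_def)

lemma bij_betw_merge_code: "bij_betw merge_code (cd \<sigma>) (cd (merge ` \<sigma>))"
proof (rule bij_betw_imageI)
  show "inj_on merge_code (cd \<sigma>)"
  proof (rule inj_onI)
    fix x y assume "x \<in> cd \<sigma>" "y \<in> cd \<sigma>" and e: "merge_code x = merge_code y"
    then obtain C C' where C: "C \<in> \<sigma>" "x = set_encode C" and C': "C' \<in> \<sigma>" "y = set_encode C'"
      unfolding cd_def by auto
    have "merge C = merge C'" using e C C' merge_code_set_encode finite_merge by (simp add: set_encode_eq)
    then have "C = C'" using inj_on_merge C C' by (auto dest: inj_onD)
    then show "x = y" using C C' by simp
  qed
  show "merge_code ` cd \<sigma> = cd (merge ` \<sigma>)" unfolding cd_def using merge_code_set_encode by (auto simp: image_image)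
qed

lemma finite_cd_groups: "finite (cd \<sigma>)" using nested_groups(1) by (rule finite_cd)

end

context
  fixes U :: "nat set" and \<rho> :: "nat set set" and P :: "nat set \<Rightarrow> nat set set"
  assumes U: "finite U" and r: "partition_on U \<rho>" and pr: "\<And>R. R \<in> \<rho> \<Longrightarrow> partition_on R (P R)"
begin

lemma refined_outer: "finite \<rho>" "R \<in> \<rho> \<Longrightarrow> finite R" "R \<in> \<rho> \<Longrightarrow> R \<subseteq> U" "R \<in> \<rho> \<Longrightarrow> R \<noteq> {}"
  using partition_on_finite[OF U r] partition_on_blocks[OF r] by auto

lemma inner_block: "R \<in> \<rho> \<Longrightarrow> B \<in> P R \<Longrightarrow> B \<subseteq> R \<and> B \<noteq> {} \<and> finite B"
proof -
  assume R: "R \<in> \<rho>" and B: "B \<in> P R"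
  have "B \<subseteq> R" "B \<noteq> {}" using partition_on_blocks[OF pr[OF R] B] by auto
  moreover have "finite B" using \<open>B \<subseteq> R\<close> refined_outer(2)[OF R] by (rule finite_subset)
  ultimately show ?thesis by simp
qed

lemma outer_disjoint: "R \<in> \<rho> \<Longrightarrow> R' \<in> \<rho> \<Longrightarrow> R \<noteq> R' \<Longrightarrow> R \<inter> R' = {}"
  using r unfolding partition_on_def disjoint_def by blast

lemma inner_disjoint:
  assumes R: "R \<in> \<rho>" and R': "R' \<in> \<rho>" and ne: "R \<noteq> R'"
  shows "P R \<inter> P R' = {}"
proof (rule ccontr)
  assume "P R \<inter> P R' \<noteq> {}"
  then obtain B where B: "B \<in> P R" "B \<in> P R'" by auto
  have "B \<subseteq> R" "B \<subseteq> R'" "B \<noteq> {}" using inner_block[OF R B(1)] inner_block[OF R' B(2)] by auto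
  then show False using outer_disjoint[OF R R' ne] by auto
qed

lemma inner_unique: "R \<in> \<rho> \<Longrightarrow> R' \<in> \<rho> \<Longrightarrow> B \<in> P R \<Longrightarrow> B \<in> P R' \<Longrightarrow> R = R'"
  using inner_disjoint by blast

lemma partition_on_UN_inner: "partition_on U (\<Union>R\<in>\<rho>. P R)"
proof (rule partition_onI)
  have "\<Union> (\<Union>R\<in>\<rho>. P R) = (\<Union>R\<in>\<rho>. \<Union> (P R))" by auto
  also have "\<dots> = (\<Union>R\<in>\<rho>. R)" using pr by (simp add: partition_on_def)
  also have "\<dots> = U" using r by (simp add: partition_on_def)
  finally show "\<Union> (\<Union>R\<in>\<rho>. P R) = U" .
  show "{} \<notin> (\<Union>R\<in>\<rho>. P R)"
  proof
    assume "{} \<in> (\<Union>R\<in>\<rho>. P R)"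
    then obtain R where "R \<in> \<rho>" "{} \<in> P R" by auto
    then show False using inner_block by auto
  qed
  fix B B' assume B: "B \<in> (\<Union>R\<in>\<rho>. P R)" and B': "B' \<in> (\<Union>R\<in>\<rho>. P R)" and ne: "B \<noteq> B'"
  then obtain R R' where R: "R \<in> \<rho>" "B \<in> P R" and R': "R' \<in> \<rho>" "B' \<in> P R'" by auto
  show "disjnt B B'"
  proof (cases "R = R'")
    case True
    then show ?thesis using pr[OF R(1)] R(2) R'(2) ne by (auto simp: partition_on_def pairwise_def)
  next
    case False
    have "B \<subseteq> R" "B' \<subseteq> R'" using inner_block R R' by auto
    then show ?thesis using outer_disjoint[OF R(1) R'(1) False] by (auto simp: disjnt_def)
  qed
qed

lemma inner_nonempty: "R \<in> \<rho> \<Longrightarrow> P R \<noteq> {}"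
proof
  assume R: "R \<in> \<rho>" and "P R = {}"
  then have "\<Union> (P R) = {}" by simp
  moreover have "\<Union> (P R) = R" using pr[OF R] by (simp add: partition_on_def)
  ultimately show False using refined_outer(4)[OF R] by simp
qed

lemma inj_on_cd_inner: "inj_on (\<lambda>R. cd (P R)) \<rho>"
proof (rule inj_onI)
  fix R R' assume R: "R \<in> \<rho>" and R': "R' \<in> \<rho>" and e: "cd (P R) = cd (P R')"
  have f1: "\<And>B. B \<in> P R \<Longrightarrow> finite B" using inner_block[OF R] by auto
  have f2: "\<And>B. B \<in> P R' \<Longrightarrow> finite B" using inner_block[OF R'] by auto
  have d1: "set_decode ` cd (P R) = P R" by (rule set_decode_cd) (rule f1)
  have d2: "set_decode ` cd (P R') = P R'" by (rule set_decode_cd) (rule f2)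
  have "P R = set_decode ` cd (P R)" using d1 by (rule sym)
  also have "\<dots> = set_decode ` cd (P R')" using e by (rule arg_cong)
  also have "\<dots> = P R'" by (rule d2)
  finally have "P R = P R'" .
  then show "R = R'"
  proof -
    assume eq: "P R = P R'"
    show "R = R'"
    proof (rule ccontr)
      assume "R \<noteq> R'"
      then have "P R \<inter> P R' = {}" by (rule inner_disjoint[OF R R'])
      then show False using eq inner_nonempty[OF R] by auto
    qed
  qed
qed

lemma merge_cd_inner: "R \<in> \<rho> \<Longrightarrow> merge (cd (P R)) = R"
proof -
  assume R: "R \<in> \<rho>"
  have f1: "\<And>B. B \<in> P R \<Longrightarrow> finite B" using inner_block[OF R] by auto
  have d1: "set_decode ` cd (P R) = P R" by (rule set_decode_cd) (rule f1)
  have "merge (cd (P R)) = \<Union> (P R)" unfolding merge_def by (simp only: d1)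
  also have "\<dots> = R" using pr[OF R] by (simp add: partition_on_def)
  finally show ?thesis .
qed

lemma cd_UN_inner: "cd (\<Union>R\<in>\<rho>. P R) = (\<Union>R\<in>\<rho>. cd (P R))"
  unfolding cd_def by (rule image_UN)

lemma partition_on_cd_inner: "partition_on (cd (\<Union>R\<in>\<rho>. P R)) ((\<lambda>R. cd (P R)) ` \<rho>)"
proof (rule partition_onI)
  show "\<Union> ((\<lambda>R. cd (P R)) ` \<rho>) = cd (\<Union>R\<in>\<rho>. P R)" by (simp add: cd_UN_inner)
  show "{} \<notin> (\<lambda>R. cd (P R)) ` \<rho>"
  proof
    assume "{} \<in> (\<lambda>R. cd (P R)) ` \<rho>"
    then obtain R where "R \<in> \<rho>" "cd (P R) = {}" by auto
    then show False using inner_nonempty by (auto simp: cd_def)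
  qed
  fix C C' assume "C \<in> (\<lambda>R. cd (P R)) ` \<rho>" "C' \<in> (\<lambda>R. cd (P R)) ` \<rho>" "C \<noteq> C'"
  then obtain R R' where R: "R \<in> \<rho>" "C = cd (P R)" and R': "R' \<in> \<rho>" "C' = cd (P R')" and ne: "R \<noteq> R'"
    by auto
  have d: "P R \<inter> P R' = {}" by (rule inner_disjoint[OF R(1) R'(1) ne])
  have "set_encode B \<noteq> set_encode B'" if "B \<in> P R" "B' \<in> P R'" for B B'
  proof
    assume "set_encode B = set_encode B'"
    then have "B = B'" using that inner_block R R' by (auto simp: set_encode_eq)
    then show False using d that by auto
  qed
  then show "disjnt C C'" using R R' by (auto simp: disjnt_def cd_def)
qed

lemma merge_image_cd_inner: "merge ` ((\<lambda>R. cd (P R)) ` \<rho>) = \<rho>"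
proof -
  have "merge ` ((\<lambda>R. cd (P R)) ` \<rho>) = (\<lambda>R. merge (cd (P R))) ` \<rho>" by (simp add: image_image)
  also have "\<dots> = (\<lambda>R. R) ` \<rho>" by (rule image_cong[OF refl]) (rule merge_cd_inner)
  finally show ?thesis by simp
qed

end

section \<open>Coassociativity on generators\<close>

context operad
begin

definition merged_assembly :: "nat set set \<Rightarrow> (nat set \<Rightarrow> 's) \<Rightarrow> (nat set \<Rightarrow> 's) \<Rightarrow> nat set \<Rightarrow> 's" where
  "merged_assembly \<sigma> a b = (\<lambda>R\<in>merge ` \<sigma>.
     eta R (set_decode ` merge_inv \<sigma> R) (restrict a (set_decode ` merge_inv \<sigma> R)) (b (merge_inv \<sigma> R)))"

lemma eta_assoc_merge:
  assumes "finite U" "partition_on U \<pi>" "a \<in> Pi\<^sub>E \<pi> M" "partition_on (cd \<pi>) \<sigma>" "b \<in> Pi\<^sub>E \<sigma> M" "m'' \<in> M (cd \<sigma>)"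
  shows "eta U \<pi> a (eta (cd \<pi>) \<sigma> b m'') = eta U (merge ` \<sigma>) (merged_assembly \<sigma> a b) (Mf merge_code (cd \<sigma>) m'')"
  using set_operad assms
  unfolding set_operad_def Let_def merged_assembly_def merge_inv_def merge_code_def merge_def[abs_def]
  by (elim conjE) (simp only:)

text \<open>The two ways of decomposing twice, indexing the terms of \<open>(Delta \<otimes> id) (Delta t\<^sub>\<alpha>)\<close> and of
  \<open>(id \<otimes> Delta) (Delta t\<^sub>\<alpha>)\<close> respectively.\<close>
definition left_nested_decomps :: "nat set \<Rightarrow> 's \<Rightarrow> ('s decomp \<times> (nat set \<Rightarrow> 's decomp)) set" where
  "left_nested_decomps U m = Sigma (decomps U m) (\<lambda>(\<rho>, c, m3). Pi\<^sub>E \<rho> (\<lambda>R. decomps R (c R)))"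

definition right_nested_decomps :: "nat set \<Rightarrow> 's \<Rightarrow> ('s decomp \<times> 's decomp) set" where
  "right_nested_decomps U m = Sigma (decomps U m) (\<lambda>(\<pi>, a, m'). decomps (cd \<pi>) m')"

definition regroup :: "'s decomp \<times> 's decomp \<Rightarrow> 's decomp \<times> (nat set \<Rightarrow> 's decomp)" where
  "regroup y = (case y of ((\<pi>, a, m'), (\<sigma>, b, m'')) \<Rightarrow>
     ((merge ` \<sigma>, merged_assembly \<sigma> a b, Mf merge_code (cd \<sigma>) m''),
      (\<lambda>R\<in>merge ` \<sigma>. (set_decode ` merge_inv \<sigma> R, restrict a (set_decode ` merge_inv \<sigma> R), b (merge_inv \<sigma> R)))))"

definition outer_of_block :: "nat set set \<Rightarrow> (nat set \<Rightarrow> 's decomp) \<Rightarrow> nat set \<Rightarrow> nat set" where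
  "outer_of_block \<rho> ch B = (THE R. R \<in> \<rho> \<and> B \<in> fst (ch R))"

definition outer_of_code :: "nat set set \<Rightarrow> (nat set \<Rightarrow> 's decomp) \<Rightarrow> nat set \<Rightarrow> nat set" where
  "outer_of_code \<rho> ch C = (THE R. R \<in> \<rho> \<and> cd (fst (ch R)) = C)"

definition ungroup :: "'s decomp \<times> (nat set \<Rightarrow> 's decomp) \<Rightarrow> 's decomp \<times> 's decomp" where
  "ungroup z = (case z of ((\<rho>, c, m3), ch) \<Rightarrow>
     (let \<pi> = (\<Union>R\<in>\<rho>. fst (ch R));
          \<sigma> = (\<lambda>R. cd (fst (ch R))) ` \<rho>;
          b = (\<lambda>C\<in>\<sigma>. snd (snd (ch (outer_of_code \<rho> ch C))));
          m'' = Mf (inv_into (cd \<sigma>) merge_code) (cd \<rho>) m3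
      in ((\<pi>, (\<lambda>B\<in>\<pi>. fst (snd (ch (outer_of_block \<rho> ch B))) B), eta (cd \<pi>) \<sigma> b m''), (\<sigma>, b, m''))))"

definition left_nested_key :: "'s decomp \<times> (nat set \<Rightarrow> 's decomp) \<Rightarrow> 's mon \<times> 's mon \<times> 's mon" where
  "left_nested_key z = (case z of ((\<rho>, c, m3), ch) \<Rightarrow>
     ((\<Sum>R\<in>\<rho>. fst (decomp_key (ch R))), (\<Sum>R\<in>\<rho>. snd (decomp_key (ch R))), {# tau M Mf (cd \<rho>) m3 #}))"

definition right_nested_key :: "'s decomp \<times> 's decomp \<Rightarrow> 's mon \<times> 's mon \<times> 's mon" where
  "right_nested_key y = (case y of ((\<pi>, a, m'), (\<sigma>, b, m'')) \<Rightarrow> (fst (decomp_key (\<pi>, a, m')), decomp_key (\<sigma>, b, m'')))"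

context
  fixes U m \<pi> a m' \<sigma> b m''
  assumes U: "finite U" and y: "((\<pi>, a, m'), (\<sigma>, b, m'')) \<in> right_nested_decomps U m"
begin

private lemma outer: "(\<pi>, a, m') \<in> subst M M U" "eta U \<pi> a m' = m"
  and inner: "(\<sigma>, b, m'') \<in> subst M M (cd \<pi>)" "eta (cd \<pi>) \<sigma> b m'' = m'"
  using y by (auto simp: right_nested_decomps_def mem_decomps_iff)

private lemma p: "partition_on U \<pi>" and a: "a \<in> Pi\<^sub>E \<pi> M"
  and s: "partition_on (cd \<pi>) \<sigma>" and b: "b \<in> Pi\<^sub>E \<sigma> M" and m'': "m'' \<in> M (cd \<sigma>)"
  using substD[OF outer(1)] substD[OF inner(1)] by auto

private abbreviation chosen where
  "chosen \<equiv> \<lambda>R\<in>merge ` \<sigma>. (set_decode ` merge_inv \<sigma> R, restrict a (set_decode ` merge_inv \<sigma> R), b (merge_inv \<sigma> R))"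

private lemma regroup_eq:
  "regroup ((\<pi>, a, m'), (\<sigma>, b, m'')) = ((merge ` \<sigma>, merged_assembly \<sigma> a b, Mf merge_code (cd \<sigma>) m''), chosen)"
  by (simp add: regroup_def)

private lemma chosen_merge: "C \<in> \<sigma> \<Longrightarrow> chosen (merge C) = (set_decode ` C, restrict a (set_decode ` C), b C)"
  using merge_inv_merge[OF U p s] by auto

private lemma group_subst: "C \<in> \<sigma> \<Longrightarrow> (set_decode ` C, restrict a (set_decode ` C), b C) \<in> subst M M (merge C)"
  using partition_on_merge_group[OF U p s] a decoded_group_subset[OF U p s] b
  by (auto simp: subst_def PiE_def Pi_def cd_set_decode)

private lemma merged_assembly_in: "merged_assembly \<sigma> a b \<in> Pi\<^sub>E (merge ` \<sigma>) M"
proof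
  fix R assume "R \<in> merge ` \<sigma>"
  then obtain C where C: "C \<in> \<sigma>" "R = merge C" by auto
  show "merged_assembly \<sigma> a b R \<in> M R"
    using C merge_inv_merge[OF U p s C(1)] eta_in[OF finite_merge[OF U p s C(1)] group_subst[OF C(1)]]
    by (simp add: merged_assembly_def)
qed (simp add: merged_assembly_def)

lemma regroup_in: "regroup ((\<pi>, a, m'), (\<sigma>, b, m'')) \<in> left_nested_decomps U m"
proof -
  have "Mf merge_code (cd \<sigma>) m'' \<in> M (cd (merge ` \<sigma>))"
    by (rule transport_in[OF finite_cd_groups[OF U p s] bij_betw_merge_code[OF U p s] m''])
  moreover have "eta U (merge ` \<sigma>) (merged_assembly \<sigma> a b) (Mf merge_code (cd \<sigma>) m'') = m"
    using eta_assoc_merge[OF U p a s b m''] outer(2) inner(2) by simp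
  ultimately have "(merge ` \<sigma>, merged_assembly \<sigma> a b, Mf merge_code (cd \<sigma>) m'') \<in> decomps U m"
    unfolding mem_decomps_iff subst_def using partition_on_merge[OF U p s] merged_assembly_in by auto
  moreover have "chosen \<in> Pi\<^sub>E (merge ` \<sigma>) (\<lambda>R. decomps R (merged_assembly \<sigma> a b R))"
    using chosen_merge group_subst merge_inv_merge[OF U p s]
    by (auto simp: merged_assembly_def mem_decomps_iff)
  ultimately show ?thesis
    unfolding regroup_eq left_nested_decomps_def by simp
qed

private lemma outer_of_code_chosen: "C \<in> \<sigma> \<Longrightarrow> outer_of_code (merge ` \<sigma>) chosen C = merge C"
  unfolding outer_of_code_def
proof (rule the_equality)
  assume C: "C \<in> \<sigma>"
  show "merge C \<in> merge ` \<sigma> \<and> cd (fst (chosen (merge C))) = C"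
    using C chosen_merge[OF C] by (simp add: cd_set_decode)
  fix R assume "R \<in> merge ` \<sigma> \<and> cd (fst (chosen R)) = C"
  then show "R = merge C" using chosen_merge by (auto simp: cd_set_decode)
qed

private lemma outer_of_block_chosen:
  "B \<in> set_decode ` C \<Longrightarrow> C \<in> \<sigma> \<Longrightarrow> outer_of_block (merge ` \<sigma>) chosen B = merge C"
  unfolding outer_of_block_def
proof (rule the_equality)
  assume B: "B \<in> set_decode ` C" and C: "C \<in> \<sigma>"
  show "merge C \<in> merge ` \<sigma> \<and> B \<in> fst (chosen (merge C))" using B C chosen_merge[OF C] by simp
  fix R assume "R \<in> merge ` \<sigma> \<and> B \<in> fst (chosen R)"
  then obtain C' where C': "C' \<in> \<sigma>" "R = merge C'" "B \<in> set_decode ` C'" using chosen_merge by auto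
  then have "C' = C" using decoded_groups_disjoint[OF U p s C'(1) C] B by blast
  then show "R = merge C" using C' by simp
qed

lemma ungroup_regroup: "ungroup (regroup ((\<pi>, a, m'), (\<sigma>, b, m''))) = ((\<pi>, a, m'), (\<sigma>, b, m''))"
proof -
  let ?\<rho> = "merge ` \<sigma>"
  have blocks_back: "(\<Union>R\<in>?\<rho>. fst (chosen R)) = \<pi>"
    using chosen_merge blocks_eq_UN_groups[OF U p s] by simp
  have "(\<lambda>R. cd (fst (chosen R))) ` ?\<rho> = (\<lambda>C. cd (fst (chosen (merge C)))) ` \<sigma>"
    by (simp add: image_image)
  also have "\<dots> = \<sigma>"
    using chosen_merge by (simp add: cd_set_decode)
  finally have groups_back: "(\<lambda>R. cd (fst (chosen R))) ` ?\<rho> = \<sigma>" .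
  have b_back: "(\<lambda>C\<in>\<sigma>. snd (snd (chosen (outer_of_code ?\<rho> chosen C)))) = b"
    by (rule restrict_PiE_eq[OF b, symmetric]) (simp add: outer_of_code_chosen merge_inv_merge[OF U p s])
  have a_back: "(\<lambda>B\<in>\<pi>. fst (snd (chosen (outer_of_block ?\<rho> chosen B))) B) = a"
  proof (rule restrict_PiE_eq[OF a, symmetric])
    fix B assume "B \<in> \<pi>"
    then obtain C where C: "C \<in> \<sigma>" "B \<in> set_decode ` C" using blocks_eq_UN_groups[OF U p s] by auto
    show "a B = fst (snd (chosen (outer_of_block ?\<rho> chosen B))) B"
      using outer_of_block_chosen[OF C(2,1)] C chosen_merge[OF C(1)] by simp
  qed
  have m''_back: "Mf (inv_into (cd \<sigma>) merge_code) (cd ?\<rho>) (Mf merge_code (cd \<sigma>) m'') = m''"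
    by (rule transport_inv[OF finite_cd_groups[OF U p s] bij_betw_merge_code[OF U p s] m''])
  have "ungroup ((?\<rho>, merged_assembly \<sigma> a b, Mf merge_code (cd \<sigma>) m''), chosen)
    = ((\<pi>, a, eta (cd \<pi>) \<sigma> b m''), (\<sigma>, b, m''))"
    unfolding ungroup_def Let_def prod.case blocks_back groups_back m''_back a_back b_back ..
  then show ?thesis unfolding regroup_eq inner(2) .
qed

lemma left_nested_key_regroup:
  "left_nested_key (regroup ((\<pi>, a, m'), (\<sigma>, b, m''))) = right_nested_key ((\<pi>, a, m'), (\<sigma>, b, m''))"
proof -
  note groups = nested_groups[OF U p s] and finite_blocks = nested_blocks(1)[OF U p s]
  have finite_decoded: "C \<in> \<sigma> \<Longrightarrow> finite (set_decode ` C)" for C using groups(2) by blast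
  have "(\<Sum>R\<in>merge ` \<sigma>. fst (decomp_key (chosen R))) = (\<Sum>C\<in>\<sigma>. fst (decomp_key (chosen (merge C))))"
    by (rule sum.reindex[OF inj_on_merge[OF U p s], unfolded comp_def])
  also have "\<dots> = (\<Sum>C\<in>\<sigma>. \<Sum>B\<in>set_decode ` C. {# tau M Mf B (a B) #})"
    using finite_decoded by (intro sum.cong refl) (simp add: merge_inv_merge[OF U p s] decomp_key_def image_mset_mset_set_eq_sum)
  also have "\<dots> = (\<Sum>B\<in>\<pi>. {# tau M Mf B (a B) #})"
    unfolding blocks_eq_UN_groups[OF U p s]
    by (rule sum.UNION_disjoint[symmetric]) (use groups(1) finite_decoded decoded_groups_disjoint[OF U p s] in auto)
  finally have first: "(\<Sum>R\<in>merge ` \<sigma>. fst (decomp_key (chosen R))) = fst (decomp_key (\<pi>, a, m'))"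
    using finite_blocks by (simp add: decomp_key_def image_mset_mset_set_eq_sum)
  have "(\<Sum>R\<in>merge ` \<sigma>. snd (decomp_key (chosen R))) = (\<Sum>C\<in>\<sigma>. snd (decomp_key (chosen (merge C))))"
    by (rule sum.reindex[OF inj_on_merge[OF U p s], unfolded comp_def])
  also have "\<dots> = (\<Sum>C\<in>\<sigma>. {# tau M Mf C (b C) #})"
    by (intro sum.cong refl) (simp add: merge_inv_merge[OF U p s] decomp_key_def cd_set_decode)
  finally have second: "(\<Sum>R\<in>merge ` \<sigma>. snd (decomp_key (chosen R))) = image_mset (\<lambda>C. tau M Mf C (b C)) (mset_set \<sigma>)"
    using groups(1) by (simp add: image_mset_mset_set_eq_sum)
  have "tau M Mf (cd (merge ` \<sigma>)) (Mf merge_code (cd \<sigma>) m'') = tau M Mf (cd \<sigma>) m''"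
    by (rule tau_transport[OF finite_cd_groups[OF U p s] bij_betw_merge_code[OF U p s] m''])
  then show ?thesis
    unfolding regroup_eq left_nested_key_def right_nested_key_def prod.case first second
    by (simp add: decomp_key_def)
qed

end

context
  fixes U m \<rho> c m3 ch
  assumes U: "finite U" and z: "((\<rho>, c, m3), ch) \<in> left_nested_decomps U m"
begin

private lemma outer_decomp: "(\<rho>, c, m3) \<in> subst M M U" "eta U \<rho> c m3 = m"
  and chosen_decomps: "ch \<in> Pi\<^sub>E \<rho> (\<lambda>R. decomps R (c R))"
  using z by (auto simp: left_nested_decomps_def mem_decomps_iff)

private lemma outer_part: "partition_on U \<rho>" and c_in: "c \<in> Pi\<^sub>E \<rho> M" and m3_in: "m3 \<in> M (cd \<rho>)"
  using substD[OF outer_decomp(1)] by auto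

private definition inner :: "nat set \<Rightarrow> nat set set" where "inner R = fst (ch R)"
private definition inner_assembly :: "nat set \<Rightarrow> nat set \<Rightarrow> 's" where "inner_assembly R = fst (snd (ch R))"
private definition inner_top :: "nat set \<Rightarrow> 's" where "inner_top R = snd (snd (ch R))"

private lemma ch_eq: "ch R = (inner R, inner_assembly R, inner_top R)"
  by (simp add: inner_def inner_assembly_def inner_top_def)

private lemma inner_decomp: "R \<in> \<rho> \<Longrightarrow> partition_on R (inner R) \<and> inner_assembly R \<in> Pi\<^sub>E (inner R) M
    \<and> inner_top R \<in> M (cd (inner R)) \<and> eta R (inner R) (inner_assembly R) (inner_top R) = c R"
  using chosen_decomps ch_eq[of R] substD[of "inner R" "inner_assembly R" "inner_top R" R]
  by (auto simp: mem_decomps_iff PiE_iff)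

private lemma inner_part: "R \<in> \<rho> \<Longrightarrow> partition_on R (inner R)"
  using inner_decomp by blast

private definition blocks :: "nat set set" where "blocks = (\<Union>R\<in>\<rho>. inner R)"
private definition groups :: "nat set set" where "groups = (\<lambda>R. cd (inner R)) ` \<rho>"

private lemma blocks_part: "partition_on U blocks"
  unfolding blocks_def by (rule partition_on_UN_inner[OF U outer_part inner_part])

private lemma groups_part: "partition_on (cd blocks) groups"
  unfolding blocks_def groups_def by (rule partition_on_cd_inner[OF U outer_part inner_part])

private lemma merge_groups: "merge ` groups = \<rho>"
  unfolding groups_def by (rule merge_image_cd_inner[OF U outer_part inner_part])

private lemma outer_of_block_eq: "R \<in> \<rho> \<Longrightarrow> B \<in> inner R \<Longrightarrow> outer_of_block \<rho> ch B = R"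
  unfolding outer_of_block_def inner_def[symmetric]
  by (rule the_equality) (use inner_unique[OF U outer_part inner_part] in blast)+

private lemma outer_of_code_eq: "R \<in> \<rho> \<Longrightarrow> outer_of_code \<rho> ch (cd (inner R)) = R"
  unfolding outer_of_code_def inner_def[symmetric]
  by (rule the_equality) (use inj_onD[OF inj_on_cd_inner[OF U outer_part inner_part]] in blast)+

private lemma merge_inv_eq: "R \<in> \<rho> \<Longrightarrow> merge_inv groups R = cd (inner R)"
  using merge_inv_merge[OF U blocks_part groups_part, of "cd (inner R)"] merge_cd_inner[OF U outer_part inner_part] by (simp add: groups_def)

private lemma decode_inner: "R \<in> \<rho> \<Longrightarrow> set_decode ` cd (inner R) = inner R"
  using inner_block[OF U outer_part inner_part] by (intro set_decode_cd) blast

private definition assembly :: "nat set \<Rightarrow> 's" where "assembly = (\<lambda>B\<in>blocks. inner_assembly (outer_of_block \<rho> ch B) B)"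
private definition top_assembly :: "nat set \<Rightarrow> 's" where "top_assembly = (\<lambda>C\<in>groups. inner_top (outer_of_code \<rho> ch C))"
private definition top_str :: "'s" where "top_str = Mf (inv_into (cd groups) merge_code) (cd \<rho>) m3"
private definition mid_str :: "'s" where "mid_str = eta (cd blocks) groups top_assembly top_str"

private lemma ungroup_eq: "ungroup ((\<rho>, c, m3), ch) = ((blocks, assembly, mid_str), (groups, top_assembly, top_str))"
  unfolding ungroup_def Let_def prod.case blocks_def groups_def assembly_def top_assembly_def top_str_def mid_str_def
    inner_def inner_assembly_def inner_top_def ..

private lemma assembly_in: "assembly \<in> Pi\<^sub>E blocks M"
proof
  fix B assume "B \<in> blocks"
  then obtain R where "R \<in> \<rho>" "B \<in> inner R" unfolding blocks_def by auto
  then show "assembly B \<in> M B"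
    using outer_of_block_eq inner_decomp \<open>B \<in> blocks\<close> by (auto simp: assembly_def)
qed (simp add: assembly_def)

private lemma top_assembly_in: "top_assembly \<in> Pi\<^sub>E groups M"
proof
  fix C assume "C \<in> groups"
  then obtain R where "R \<in> \<rho>" "C = cd (inner R)" unfolding groups_def by auto
  then show "top_assembly C \<in> M C"
    using outer_of_code_eq inner_decomp \<open>C \<in> groups\<close> by (auto simp: top_assembly_def)
qed (simp add: top_assembly_def)

private lemma bij_merge_code: "bij_betw merge_code (cd groups) (cd \<rho>)"
  using bij_betw_merge_code[OF U blocks_part groups_part] merge_groups by simp

private lemma top_in: "top_str \<in> M (cd groups)"
  unfolding top_str_def
  by (rule transport_in[OF finite_cd[OF partition_on_finite(1)[OF U outer_part]] bij_betw_inv_into[OF bij_merge_code] m3_in])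

private lemma merge_code_top: "Mf merge_code (cd groups) top_str = m3"
  unfolding top_str_def by (rule transport_inv'[OF finite_cd_groups[OF U blocks_part groups_part] bij_merge_code m3_in])

private lemma restrict_assembly: "R \<in> \<rho> \<Longrightarrow> restrict assembly (inner R) = inner_assembly R"
  using inner_decomp outer_of_block_eq
  by (intro restrict_PiE_eq[symmetric]) (auto simp: assembly_def blocks_def)

private lemma merged_assembly_eq: "merged_assembly groups assembly top_assembly = c"
proof -
  have "c = restrict (merged_assembly groups assembly top_assembly) \<rho>"
  proof (rule restrict_PiE_eq[OF c_in])
    fix R assume R: "R \<in> \<rho>"
    have "merged_assembly groups assembly top_assembly R = eta R (inner R) (inner_assembly R) (inner_top R)"
      unfolding merged_assembly_def merge_groups
      using R merge_inv_eq decode_inner restrict_assembly outer_of_code_eq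
      by (simp add: top_assembly_def groups_def)
    then show "c R = merged_assembly groups assembly top_assembly R" using inner_decomp[OF R] by simp
  qed
  then show ?thesis unfolding merged_assembly_def merge_groups by simp
qed

lemma ungroup_in: "ungroup ((\<rho>, c, m3), ch) \<in> right_nested_decomps U m"
proof -
  have "eta U blocks assembly mid_str = m"
    using eta_assoc_merge[OF U blocks_part assembly_in groups_part top_assembly_in top_in] outer_decomp(2)
    unfolding mid_str_def merge_groups merged_assembly_eq merge_code_top by simp
  moreover have "mid_str \<in> M (cd blocks)"
    unfolding mid_str_def using groups_part top_assembly_in top_in
    by (intro eta_in finite_cd partition_on_finite(1)[OF U blocks_part]) (simp add: subst_def)
  ultimately show ?thesis
    unfolding ungroup_eq right_nested_decomps_def
    using blocks_part assembly_in groups_part top_assembly_in top_in by (auto simp: mem_decomps_iff subst_def mid_str_def)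
qed

lemma regroup_ungroup: "regroup (ungroup ((\<rho>, c, m3), ch)) = ((\<rho>, c, m3), ch)"
proof -
  have "(\<lambda>R\<in>merge ` groups. (set_decode ` merge_inv groups R, restrict assembly (set_decode ` merge_inv groups R),
      top_assembly (merge_inv groups R))) = ch"
    unfolding merge_groups
    using ch_eq merge_inv_eq decode_inner restrict_assembly outer_of_code_eq
    by (intro restrict_PiE_eq[OF chosen_decomps, symmetric]) (simp add: top_assembly_def groups_def)
  then show ?thesis
    unfolding ungroup_eq regroup_def prod.case merged_assembly_eq merge_code_top merge_groups by simp
qed

end

definition Delta_mon :: "'s mon \<Rightarrow> ('s mon \<times> 's mon \<Rightarrow>\<^sub>0 'k::comm_ring_1)" where
  "Delta_mon \<mu> = prod_mset (image_mset (DeltaGen M Mf eta) \<mu>)"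

lemma Delta_eq_lin_ext: "Delta M Mf eta = lin_ext Delta_mon"
  by (simp add: Delta_def Delta_mon_def[abs_def])

lemma Delta_mon_add: "Delta_mon (\<mu> + \<nu>) = Delta_mon \<mu> * Delta_mon \<nu>"
  by (simp add: Delta_mon_def)

lemma Delta_mon_0 [simp]: "Delta_mon 0 = 1"
  by (simp add: Delta_mon_def)

lemma Delta_mon_tau: "finite U \<Longrightarrow> m \<in> M U \<Longrightarrow> Delta_mon {# tau M Mf U m #} = DeltaRep M Mf eta U m"
  by (simp add: Delta_mon_def DeltaGen_tau)

lemma Delta_single: "Delta M Mf eta (Poly_Mapping.single \<mu> c) = smult_pm c (Delta_mon \<mu>)"
  by (simp add: Delta_eq_lin_ext)

lemma Delta_add: "Delta M Mf eta (p + q) = Delta M Mf eta p + Delta M Mf eta q"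
  by (simp add: Delta_eq_lin_ext lin_ext_add)

lemma Delta_smult: "Delta M Mf eta (smult_pm c p) = smult_pm c (Delta M Mf eta p)"
  by (simp add: Delta_eq_lin_ext lin_ext_smult)

lemma Delta_mult: "Delta M Mf eta (p * q) = Delta M Mf eta p * Delta M Mf eta q"
  unfolding Delta_eq_lin_ext by (rule lin_ext_mult) (simp add: Delta_mon_add)

lemma Delta_1: "Delta M Mf eta 1 = 1"
  by (simp add: Delta_eq_lin_ext flip: single_one)

lemma subst_finite:
  assumes "(\<pi>, a, m') \<in> subst M M U" "finite U"
  shows "finite \<pi>" "finite (cd \<pi>)" "R \<in> \<pi> \<Longrightarrow> finite R"
  using partition_on_finite[OF assms(2) substD(1)[OF assms(1)]] by (auto intro: finite_cd)

lemma comul_right_DeltaRep: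
  assumes U: "finite U"
  shows "comul_right (Delta M Mf eta) (DeltaRep M Mf eta U m :: _ \<Rightarrow>\<^sub>0 'k::comm_ring_1)
    = (\<Sum>s\<in>right_nested_decomps U m. Poly_Mapping.single (right_nested_key s) 1)"
proof -
  have "comul_right (Delta M Mf eta) (DeltaRep M Mf eta U m :: _ \<Rightarrow>\<^sub>0 'k)
      = (\<Sum>x\<in>decomps U m. \<Sum>y\<in>decomps (cd (fst x)) (snd (snd x)). Poly_Mapping.single (right_nested_key (x, y)) 1)"
    unfolding DeltaRep_eq comul_right_def lin_ext_sum
  proof (rule sum.cong[OF refl])
    fix x assume x: "x \<in> decomps U m"
    obtain \<pi> a m' where xe: "x = (\<pi>, a, m')" by (cases x)
    have xs: "(\<pi>, a, m') \<in> subst M M U" using x xe mem_decomps_iff by auto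
    have "Delta M Mf eta (Poly_Mapping.single {#tau M Mf (cd \<pi>) m'#} 1) = (DeltaRep M Mf eta (cd \<pi>) m' :: _ \<Rightarrow>\<^sub>0 'k)"
      using Delta_mon_tau[OF subst_finite(2)[OF xs U] substD(3)[OF xs]] by (simp add: Delta_single)
    then show "lin_ext (\<lambda>(x, y). ptens (Poly_Mapping.single x 1) (Delta M Mf eta (Poly_Mapping.single y 1)))
        (Poly_Mapping.single (decomp_key x) 1)
      = (\<Sum>y\<in>decomps (cd (fst x)) (snd (snd x)). Poly_Mapping.single (right_nested_key (x, y)) (1::'k))"
      unfolding xe by (simp add: decomp_key_def DeltaRep_eq ptens_sum_right right_nested_key_def split: prod.splits)
        (rule sum.cong[OF refl], simp split: prod.splits)
  qed
  also have "\<dots> = (\<Sum>s\<in>right_nested_decomps U m. Poly_Mapping.single (right_nested_key s) 1)"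
    unfolding right_nested_decomps_def
    by (subst sum.Sigma[OF finite_decomps[OF U]])
      (auto simp: mem_decomps_iff split_def U intro!: sum.cong finite_decomps subst_finite(2))
  finally show ?thesis .
qed

lemma comul_left_DeltaRep:
  assumes U: "finite U"
  shows "push_keys reassoc (comul_left (Delta M Mf eta) (DeltaRep M Mf eta U m :: _ \<Rightarrow>\<^sub>0 'k::comm_ring_1))
    = (\<Sum>z\<in>left_nested_decomps U m. Poly_Mapping.single (left_nested_key z) 1)"
proof -
  have "push_keys reassoc (comul_left (Delta M Mf eta) (DeltaRep M Mf eta U m :: _ \<Rightarrow>\<^sub>0 'k))
      = (\<Sum>x\<in>decomps U m. \<Sum>ch\<in>Pi\<^sub>E (fst x) (\<lambda>R. decomps R (fst (snd x) R)).
           Poly_Mapping.single (left_nested_key (x, ch)) 1)"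
    unfolding DeltaRep_eq comul_left_def lin_ext_sum push_keys_sum
  proof (rule sum.cong[OF refl])
    fix x assume x: "x \<in> decomps U m"
    obtain \<rho> c m3 where xe: "x = (\<rho>, c, m3)" by (cases x)
    have xs: "(\<rho>, c, m3) \<in> subst M M U" using x xe mem_decomps_iff by auto
    note fin = subst_finite[OF xs U]
    have "Delta M Mf eta (Poly_Mapping.single (image_mset (\<lambda>R. tau M Mf R (c R)) (mset_set \<rho>)) 1)
        = (\<Prod>R\<in>\<rho>. DeltaGen M Mf eta (tau M Mf R (c R)) :: _ \<Rightarrow>\<^sub>0 'k)"
      by (simp add: Delta_single Delta_mon_def multiset.map_comp comp_def prod_unfold_prod_mset)
    also have "\<dots> = (\<Prod>R\<in>\<rho>. \<Sum>s\<in>decomps R (c R). Poly_Mapping.single (decomp_key s) 1)"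
      using substD(2)[OF xs] fin(3) by (intro prod.cong refl) (auto simp: DeltaGen_tau DeltaRep_eq PiE_iff)
    also have "\<dots> = (\<Sum>ch\<in>Pi\<^sub>E \<rho> (\<lambda>R. decomps R (c R)). \<Prod>R\<in>\<rho>. Poly_Mapping.single (decomp_key (ch R)) 1)"
      by (rule prod_sum_PiE) (auto simp: fin finite_decomps)
    finally have expand: "Delta M Mf eta (Poly_Mapping.single (image_mset (\<lambda>R. tau M Mf R (c R)) (mset_set \<rho>)) 1)
        = (\<Sum>ch\<in>Pi\<^sub>E \<rho> (\<lambda>R. decomps R (c R)). Poly_Mapping.single (\<Sum>R\<in>\<rho>. decomp_key (ch R)) (1::'k))"
      by (simp add: prod_single)
    show "push_keys reassoc (lin_ext (\<lambda>(x, y). ptens (Delta M Mf eta (Poly_Mapping.single x 1)) (Poly_Mapping.single y 1))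
        (Poly_Mapping.single (decomp_key x) 1))
      = (\<Sum>ch\<in>Pi\<^sub>E (fst x) (\<lambda>R. decomps R (fst (snd x) R)). Poly_Mapping.single (left_nested_key (x, ch)) (1::'k))"
      unfolding xe
      by (simp add: decomp_key_def expand ptens_sum_left push_keys_sum left_nested_key_def reassoc_def fst_sum snd_sum)
  qed
  also have "\<dots> = (\<Sum>z\<in>left_nested_decomps U m. Poly_Mapping.single (left_nested_key z) 1)"
    unfolding left_nested_decomps_def
    by (subst sum.Sigma[OF finite_decomps[OF U]])
      (auto simp: mem_decomps_iff split_def U intro!: sum.cong finite_PiE finite_decomps intro: subst_finite)
  finally show ?thesis .
qed

text \<open>The two nested sums are matched term by term by the bijection \<open>regroup\<close>, which is where the
  associativity of \<open>eta\<close> enters.\<close>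
lemma DeltaRep_coassoc:
  assumes U: "finite U"
  shows "push_keys reassoc (comul_left (Delta M Mf eta) (DeltaRep M Mf eta U m :: _ \<Rightarrow>\<^sub>0 'k::comm_ring_1))
    = comul_right (Delta M Mf eta) (DeltaRep M Mf eta U m)"
  unfolding comul_left_DeltaRep[OF U] comul_right_DeltaRep[OF U]
proof (rule sum.reindex_bij_witness[where i = regroup and j = ungroup])
  fix z assume z: "z \<in> left_nested_decomps U m"
  obtain \<rho> c m3 ch where ze: "z = ((\<rho>, c, m3), ch)" by (cases z) auto
  show "regroup (ungroup z) = z" "ungroup z \<in> right_nested_decomps U m"
    using regroup_ungroup[OF U z[unfolded ze]] ungroup_in[OF U z[unfolded ze]] ze by simp_all
  then show "Poly_Mapping.single (right_nested_key (ungroup z)) 1 = Poly_Mapping.single (left_nested_key z) (1::'k)"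
    using left_nested_key_regroup[OF U] by (cases "ungroup z") auto
next
  fix y assume y: "y \<in> right_nested_decomps U m"
  obtain \<pi> a m' \<sigma> b m'' where ye: "y = ((\<pi>, a, m'), (\<sigma>, b, m''))" by (cases y) auto
  show "ungroup (regroup y) = y" "regroup y \<in> left_nested_decomps U m"
    using ungroup_regroup[OF U y[unfolded ye]] regroup_in[OF U y[unfolded ye]] ye by simp_all
qed

end

section \<open>The bialgebra of types\<close>

context operad
begin

abbreviation "Types \<equiv> stypes M Mf"
abbreviation "Mon \<equiv> monomials_over Types"

lemma tau_in_Types: "finite U \<Longrightarrow> m \<in> M U \<Longrightarrow> tau M Mf U m \<in> Types"
  unfolding stypes_def by blast

lemma Types_tau: "\<alpha> \<in> Types \<Longrightarrow> \<exists>U m. finite U \<and> m \<in> M U \<and> \<alpha> = tau M Mf U m"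
  unfolding stypes_def by blast

lemma Mon_add: "x \<in> Mon \<Longrightarrow> y \<in> Mon \<Longrightarrow> x + y \<in> Mon"
  by (auto simp: monomials_over_def)

lemma Mon_induct [consumes 1, case_names empty add]:
  assumes "\<mu> \<in> Mon" "P {#}"
    and "\<And>U m \<nu>. finite U \<Longrightarrow> m \<in> M U \<Longrightarrow> \<nu> \<in> Mon \<Longrightarrow> P \<nu> \<Longrightarrow> P (add_mset (tau M Mf U m) \<nu>)"
  shows "P \<mu>"
  using assms(1)
proof (induction \<mu>)
  case (add \<alpha> \<mu>)
  then have \<alpha>: "\<alpha> \<in> Types" and \<mu>: "\<mu> \<in> Mon" by (auto simp: monomials_over_def)
  obtain U m where "finite U" "m \<in> M U" "\<alpha> = tau M Mf U m" using Types_tau[OF \<alpha>] by blast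
  with \<mu> add.IH show ?case by (auto intro: assms(3))
qed (rule assms(2))

lemma Delta_mon_add_tau: "finite U \<Longrightarrow> m \<in> M U
    \<Longrightarrow> Delta_mon (add_mset (tau M Mf U m) \<nu>) = DeltaRep M Mf eta U m * Delta_mon \<nu>"
  by (simp add: Delta_mon_def DeltaGen_tau)

lemma keys_DeltaRep: "finite U \<Longrightarrow> Poly_Mapping.keys (DeltaRep M Mf eta U m :: _ \<Rightarrow>\<^sub>0 'k::comm_ring_1) \<subseteq> Mon \<times> Mon"
proof -
  assume U: "finite U"
  have "decomp_key x \<in> Mon \<times> Mon" if "x \<in> decomps U m" for x
  proof -
    obtain \<pi> a m' where x: "x = (\<pi>, a, m')" "(\<pi>, a, m') \<in> subst M M U"
      using \<open>x \<in> decomps U m\<close> mem_decomps_iff by (cases x) auto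
    show ?thesis
      using tau_in_Types subst_finite[OF x(2) U] substD[OF x(2)]
      by (auto simp: x(1) decomp_key_def monomials_over_def PiE_iff)
  qed
  then show ?thesis
    unfolding DeltaRep_eq using keys_sum[of _ "decomps U m"] by fastforce
qed

lemma keys_Delta_mon: "\<mu> \<in> Mon \<Longrightarrow> Poly_Mapping.keys (Delta_mon \<mu> :: _ \<Rightarrow>\<^sub>0 'k::comm_ring_1) \<subseteq> Mon \<times> Mon"
proof (induction rule: Mon_induct)
  case empty
  then show ?case by (simp add: zero_prod_def monomials_over_def)
next
  case (add U m \<nu>)
  then show ?case
    using keys_mult_subset[OF keys_DeltaRep[OF add(1)] add(4)] Mon_add
    by (fastforce simp: Delta_mon_add_tau)
qed

lemma keys_Delta: "Poly_Mapping.keys p \<subseteq> Mon \<Longrightarrow> Poly_Mapping.keys (Delta M Mf eta p :: _ \<Rightarrow>\<^sub>0 'k::comm_ring_1) \<subseteq> Mon \<times> Mon"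
  unfolding Delta_eq_lin_ext using keys_lin_ext[of Delta_mon p] keys_Delta_mon by blast

subsection \<open>Coassociativity\<close>

lemma Delta_coassoc:
  assumes p: "Poly_Mapping.keys p \<subseteq> Mon"
  shows "push_keys reassoc (comul_left (Delta M Mf eta) (Delta M Mf eta p :: _ \<Rightarrow>\<^sub>0 'k::comm_ring_1))
    = comul_right (Delta M Mf eta) (Delta M Mf eta p)"
proof -
  have mon: "push_keys reassoc (comul_left (Delta M Mf eta) (Delta_mon \<mu> :: _ \<Rightarrow>\<^sub>0 'k))
      = comul_right (Delta M Mf eta) (Delta_mon \<mu>)" if "\<mu> \<in> Mon" for \<mu>
    using that
  proof (induction rule: Mon_induct)
    case empty
    have "comul_left (Delta M Mf eta) (1 :: _ \<Rightarrow>\<^sub>0 'k) = 1" "comul_right (Delta M Mf eta) (1 :: _ \<Rightarrow>\<^sub>0 'k) = 1"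
      by (rule comul_left_1 comul_right_1, rule Delta_mult, rule Delta_1)+
    then show ?case
      by (simp add: push_keys_1[of reassoc, OF reassoc_0])
  next
    case (add U m \<nu>)
    then show ?case
      by (simp add: Delta_mon_add_tau comul_left_mult[OF Delta_mult Delta_1]
          comul_right_mult[OF Delta_mult Delta_1] push_keys_mult reassoc_add DeltaRep_coassoc)
  qed
  have "push_keys reassoc (comul_left (Delta M Mf eta) (Delta M Mf eta p :: _ \<Rightarrow>\<^sub>0 'k))
      = lin_ext (\<lambda>\<mu>. push_keys reassoc (comul_left (Delta M Mf eta) (Delta_mon \<mu>))) p"
    unfolding Delta_eq_lin_ext comul_left_def by (simp add: lin_ext_compose push_keys_lin_ext)
  also have "\<dots> = lin_ext (\<lambda>\<mu>. comul_right (Delta M Mf eta) (Delta_mon \<mu>)) p"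
    using p mon by (intro lin_ext_cong) blast
  also have "\<dots> = comul_right (Delta M Mf eta) (Delta M Mf eta p)"
    unfolding Delta_eq_lin_ext comul_right_def by (simp add: lin_ext_compose)
  finally show ?thesis .
qed

subsection \<open>The counit\<close>

definition eps_mon :: "'s mon \<Rightarrow> 'k::comm_ring_1" where
  "eps_mon \<mu> = (if set_mset \<mu> \<subseteq> {bullet M Mf} then 1 else 0)"

lemma eps_mon_add: "eps_mon (x + y) = eps_mon x * eps_mon y"
  by (simp add: eps_mon_def)

lemma eps_mon_0 [simp]: "eps_mon 0 = 1"
  by (simp add: eps_mon_def)

lemma lin_ext_single_eps_mon: "lin_ext (\<lambda>\<mu>. Poly_Mapping.single k (eps_mon \<mu>)) p = Poly_Mapping.single k (eps M Mf p)"
  by (simp add: lin_ext_single_const eps_def eps_mon_def)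

lemma eps_single: "eps M Mf (Poly_Mapping.single \<mu> c) = c * eps_mon \<mu>"
  by (cases "c = 0") (simp_all add: eps_def eps_mon_def)

lemma eps_add: "eps M Mf (p + q) = eps M Mf p + eps M Mf q"
  and eps_smult: "eps M Mf (smult_pm c p) = c * eps M Mf p"
  and eps_mult: "eps M Mf (p * q) = eps M Mf p * eps M Mf q"
  and eps_1: "eps M Mf 1 = 1"
  for p q :: "'s mon \<Rightarrow>\<^sub>0 'k::comm_ring_1"
proof -
  let ?E = "lin_ext (\<lambda>\<mu>. Poly_Mapping.single (0::nat) (eps_mon \<mu>))"
  have "?E (p * q) = ?E p * ?E q"
    by (rule lin_ext_mult) (simp add: eps_mon_add mult_single)
  moreover have "?E (p + q) = ?E p + ?E q" "?E (smult_pm c p) = smult_pm c (?E p)"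
    by (simp_all add: lin_ext_add lin_ext_smult)
  ultimately show "eps M Mf (p + q) = eps M Mf p + eps M Mf q" "eps M Mf (smult_pm c p) = c * eps M Mf p"
    "eps M Mf (p * q) = eps M Mf p * eps M Mf q"
    by (simp_all add: lin_ext_single_eps_mon mult_single inj_eq[OF inj_single] flip: single_add)
  show "eps M Mf 1 = 1"
    by (simp add: eps_single flip: single_one)
qed

text \<open>The only terms of \<open>Delta t\<^sub>\<alpha>\<close> that survive \<open>eps \<otimes> id\<close> and \<open>id \<otimes> eps\<close>, respectively.\<close>
definition singleton_decomp :: "nat set \<Rightarrow> 's \<Rightarrow> 's decomp" where
  "singleton_decomp U m = ((\<lambda>u. {u}) ` U, (\<lambda>B\<in>(\<lambda>u. {u}) ` U. unit_str M B), Mf (\<lambda>u. set_encode {u}) U m)"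

definition whole_decomp :: "nat set \<Rightarrow> 's \<Rightarrow> 's decomp" where
  "whole_decomp U m = ({U}, (\<lambda>B\<in>{U}. m), unit_str M {set_encode U})"

lemma singleton_decomp:
  assumes U: "finite U" and m: "m \<in> M U"
  shows "singleton_decomp U m \<in> decomps U m"
    "snd (decomp_key (singleton_decomp U m)) = {# tau M Mf U m #}"
    "eps_mon (fst (decomp_key (singleton_decomp U m))) = (1::'k::comm_ring_1)"
proof -
  have "singleton_decomp U m \<in> subst M M U"
    using partition_on_singletons[of U] unit_str_in transport_in[OF U bij_betw_singleton_code m]
    by (auto simp: singleton_decomp_def subst_def)
  then show "singleton_decomp U m \<in> decomps U m"
    using eta_unit_right[OF U m] by (simp add: singleton_decomp_def mem_decomps_iff)
  show "snd (decomp_key (singleton_decomp U m)) = {# tau M Mf U m #}"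
    using tau_transport[OF U bij_betw_singleton_code m] by (simp add: singleton_decomp_def decomp_key_def)
  have "tau M Mf {u} (unit_str M {u}) = bullet M Mf" for u
    using tau_eq_bullet_iff[of "{u}" "unit_str M {u}"] unit_str_in[of "{u}"] by simp
  then show "eps_mon (fst (decomp_key (singleton_decomp U m))) = (1::'k)"
    using U by (auto simp: singleton_decomp_def decomp_key_def eps_mon_def)
qed

lemma decomps_eps_mon_fst:
  assumes U: "finite U" and x: "x \<in> decomps U m" and ne: "x \<noteq> singleton_decomp U m"
  shows "eps_mon (fst (decomp_key x)) = (0::'k::comm_ring_1)"
proof (rule ccontr)
  assume nz: "eps_mon (fst (decomp_key x)) \<noteq> (0::'k)"
  obtain \<pi> a m' where xe: "x = (\<pi>, a, m')" by (cases x)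
  have xs: "(\<pi>, a, m') \<in> subst M M U" and e: "eta U \<pi> a m' = m"
    using x xe mem_decomps_iff by auto
  note sD = substD[OF xs] and fin = subst_finite[OF xs U]
  have "B \<in> \<pi> \<Longrightarrow> tau M Mf B (a B) = bullet M Mf" for B
    using nz fin(1) by (auto simp: xe decomp_key_def eps_mon_def split: if_splits)
  then have "B \<in> \<pi> \<Longrightarrow> card B = 1" for B
    using tau_eq_bullet_iff[OF fin(3)] sD(2) by (auto simp: PiE_iff)
  then have pe: "\<pi> = (\<lambda>u. {u}) ` U" by (rule partition_on_card_1[OF sD(1)])
  have ae: "a = (\<lambda>B\<in>\<pi>. unit_str M B)"
    using sD(2) by (intro restrict_PiE_eq) (auto simp: pe PiE_iff intro: unit_str_unique)
  let ?g = "\<lambda>u. set_encode {u}"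
  have m': "m' \<in> M (cd ((\<lambda>u. {u}) ` U))" using sD(3) pe by simp
  define m0 where "m0 = Mf (inv_into U ?g) (cd ((\<lambda>u. {u}) ` U)) m'"
  have m0: "m0 \<in> M U" unfolding m0_def
    using U by (intro transport_in[OF _ bij_betw_inv_into[OF bij_betw_singleton_code] m']) (simp add: cd_def)
  have gm: "Mf ?g U m0 = m'" unfolding m0_def by (rule transport_inv'[OF U bij_betw_singleton_code m'])
  have "eta U \<pi> a m' = m0" using eta_unit_right[OF U m0] unfolding gm pe ae .
  then show False using e pe ae gm ne by (simp add: xe singleton_decomp_def)
qed

lemma whole_decomp:
  assumes U: "finite U" and m: "m \<in> M U"
  shows "whole_decomp U m \<in> decomps U m"
    "fst (decomp_key (whole_decomp U m)) = {# tau M Mf U m #}"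
    "eps_mon (snd (decomp_key (whole_decomp U m))) = (1::'k::comm_ring_1)"
proof -
  have u: "unit_str M {set_encode U} \<in> M {set_encode U}" by (rule unit_str_in) simp
  have "U \<noteq> {}" using m no_structures_empty by auto
  then have "whole_decomp U m \<in> subst M M U"
    using partition_on_space[of U] m u by (auto simp: whole_decomp_def subst_def cd_def)
  then show "whole_decomp U m \<in> decomps U m"
    using eta_unit_left[OF U m] by (simp add: whole_decomp_def mem_decomps_iff)
  show "fst (decomp_key (whole_decomp U m)) = {# tau M Mf U m #}"
    by (simp add: whole_decomp_def decomp_key_def)
  show "eps_mon (snd (decomp_key (whole_decomp U m))) = (1::'k)"
    using tau_eq_bullet_iff[of "{set_encode U}"] u by (simp add: whole_decomp_def decomp_key_def eps_mon_def cd_def)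
qed

lemma decomps_eps_mon_snd:
  assumes U: "finite U" and x: "x \<in> decomps U m" and ne: "x \<noteq> whole_decomp U m"
  shows "eps_mon (snd (decomp_key x)) = (0::'k::comm_ring_1)"
proof (rule ccontr)
  assume nz: "eps_mon (snd (decomp_key x)) \<noteq> (0::'k)"
  obtain \<pi> a m' where xe: "x = (\<pi>, a, m')" by (cases x)
  have xs: "(\<pi>, a, m') \<in> subst M M U" and e: "eta U \<pi> a m' = m"
    using x xe mem_decomps_iff by auto
  note sD = substD[OF xs] and fin = subst_finite[OF xs U]
  have "tau M Mf (cd \<pi>) m' = bullet M Mf"
    using nz by (auto simp: xe decomp_key_def eps_mon_def split: if_splits)
  then have "card \<pi> = 1"
    using tau_eq_bullet_iff[OF fin(2) sD(3)] card_cd[of \<pi>] fin(3) by simp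
  then obtain B where "\<pi> = {B}" by (rule card_1_singletonE)
  then have pe: "\<pi> = {U}"
    using sD(1) by (simp add: partition_on_def)
  have m'e: "m' = unit_str M {set_encode U}"
    using sD(3) pe by (intro unit_str_unique) (auto simp: cd_def)
  have ae: "a = (\<lambda>B\<in>{U}. a U)"
    using sD(2) pe by (intro restrict_PiE_eq) auto
  have "a U = m"
    using eta_unit_left[OF U, of "a U"] sD(2) pe ae m'e e by (auto simp: PiE_iff)
  then show False using pe ae m'e ne by (simp add: xe whole_decomp_def)
qed

definition counit_left :: "('s mon \<times> 's mon \<Rightarrow>\<^sub>0 'k::comm_ring_1) \<Rightarrow> ('s mon \<Rightarrow>\<^sub>0 'k)" where
  "counit_left X = lin_ext (\<lambda>(x, y). smult_pm (eps_mon x) (Poly_Mapping.single y 1)) X"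

definition counit_right :: "('s mon \<times> 's mon \<Rightarrow>\<^sub>0 'k::comm_ring_1) \<Rightarrow> ('s mon \<Rightarrow>\<^sub>0 'k)" where
  "counit_right X = lin_ext (\<lambda>(x, y). smult_pm (eps_mon y) (Poly_Mapping.single x 1)) X"

lemma counit_left_mult: "counit_left (X * Y) = counit_left X * counit_left Y"
  and counit_right_mult: "counit_right (X * Y) = counit_right X * counit_right Y"
  unfolding counit_left_def counit_right_def
  by (rule lin_ext_mult; auto simp: eps_mon_add mult_single)+

lemma DeltaRep_counit:
  assumes U: "finite U" and m: "m \<in> M U"
  shows "counit_left (DeltaRep M Mf eta U m) = Poly_Mapping.single {# tau M Mf U m #} (1::'k::comm_ring_1)"
    "counit_right (DeltaRep M Mf eta U m) = Poly_Mapping.single {# tau M Mf U m #} (1::'k::comm_ring_1)"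
proof -
  have "counit_left (DeltaRep M Mf eta U m)
      = (\<Sum>x\<in>decomps U m. smult_pm (eps_mon (fst (decomp_key x))) (Poly_Mapping.single (snd (decomp_key x)) (1::'k)))"
    unfolding counit_left_def DeltaRep_eq lin_ext_sum by (simp add: split_def)
  also have "\<dots> = (\<Sum>x\<in>{singleton_decomp U m}. smult_pm (eps_mon (fst (decomp_key x))) (Poly_Mapping.single (snd (decomp_key x)) 1))"
    using singleton_decomp(1)[OF U m]
    by (intro sum.mono_neutral_right finite_decomps[OF U]) (simp_all add: decomps_eps_mon_fst[OF U, of _ m])
  finally show "counit_left (DeltaRep M Mf eta U m) = Poly_Mapping.single {# tau M Mf U m #} (1::'k)"
    by (simp add: singleton_decomp[OF U m])
  have "counit_right (DeltaRep M Mf eta U m)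
      = (\<Sum>x\<in>decomps U m. smult_pm (eps_mon (snd (decomp_key x))) (Poly_Mapping.single (fst (decomp_key x)) (1::'k)))"
    unfolding counit_right_def DeltaRep_eq lin_ext_sum by (simp add: split_def)
  also have "\<dots> = (\<Sum>x\<in>{whole_decomp U m}. smult_pm (eps_mon (snd (decomp_key x))) (Poly_Mapping.single (fst (decomp_key x)) 1))"
    using whole_decomp(1)[OF U m]
    by (intro sum.mono_neutral_right finite_decomps[OF U]) (simp_all add: decomps_eps_mon_snd[OF U, of _ m])
  finally show "counit_right (DeltaRep M Mf eta U m) = Poly_Mapping.single {# tau M Mf U m #} (1::'k)"
    by (simp add: whole_decomp[OF U m])
qed

lemma Delta_counit:
  assumes p: "Poly_Mapping.keys p \<subseteq> Mon"
  shows "counit_left (Delta M Mf eta p) = (p :: _ \<Rightarrow>\<^sub>0 'k::comm_ring_1)"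
    "counit_right (Delta M Mf eta p) = p"
proof -
  have mon: "counit_left (Delta_mon \<mu>) = Poly_Mapping.single \<mu> (1::'k) \<and> counit_right (Delta_mon \<mu>) = Poly_Mapping.single \<mu> (1::'k)"
    if "\<mu> \<in> Mon" for \<mu>
    using that
  proof (induction rule: Mon_induct)
    case empty
    then show ?case by (simp add: counit_left_def counit_right_def zero_prod_def flip: single_one)
  next
    case (add U m \<nu>)
    then show ?case
      by (simp add: Delta_mon_add_tau counit_left_mult counit_right_mult DeltaRep_counit mult_single)
  qed
  have "counit_left (Delta M Mf eta p) = lin_ext (\<lambda>\<mu>. counit_left (Delta_mon \<mu>)) p"
    "counit_right (Delta M Mf eta p) = lin_ext (\<lambda>\<mu>. counit_right (Delta_mon \<mu>)) p"
    unfolding Delta_eq_lin_ext counit_left_def counit_right_def by (simp_all add: lin_ext_compose)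
  moreover have "lin_ext (\<lambda>\<mu>. counit_left (Delta_mon \<mu>)) p = lin_ext (\<lambda>\<mu>. Poly_Mapping.single \<mu> 1) p"
    "lin_ext (\<lambda>\<mu>. counit_right (Delta_mon \<mu>)) p = lin_ext (\<lambda>\<mu>. Poly_Mapping.single \<mu> 1) p"
    using p mon by (auto intro: lin_ext_cong)
  ultimately show "counit_left (Delta M Mf eta p) = p" "counit_right (Delta M Mf eta p) = p"
    by (simp_all add: lin_ext_id)
qed

theorem bialgebra: "bialgebra_on Mon (Delta M Mf eta) (eps M Mf :: ('s mon \<Rightarrow>\<^sub>0 'k::comm_ring_1) \<Rightarrow> 'k)"
proof -
  have coassoc: "Poly_Mapping.lookup (comul_left (Delta M Mf eta) (Delta M Mf eta p)) ((x, y), z)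
      = Poly_Mapping.lookup (comul_right (Delta M Mf eta) (Delta M Mf eta p)) (x, y, z)"
    if "Poly_Mapping.keys p \<subseteq> Mon" for p :: "'s mon \<Rightarrow>\<^sub>0 'k" and x y z
    by (rule lookup_comul_left_right[OF Delta_coassoc[OF that]])
  have counit: "lin_ext (\<lambda>(x, y). smult_pm (eps M Mf (Poly_Mapping.single x 1)) (Poly_Mapping.single y 1)) (Delta M Mf eta p) = p"
    "lin_ext (\<lambda>(x, y). smult_pm (eps M Mf (Poly_Mapping.single y 1)) (Poly_Mapping.single x 1)) (Delta M Mf eta p) = p"
    if "Poly_Mapping.keys p \<subseteq> Mon" for p :: "'s mon \<Rightarrow>\<^sub>0 'k"
    using Delta_counit[OF that] by (simp_all add: counit_left_def counit_right_def eps_single)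
  have "0 \<in> Mon" by (simp add: monomials_over_def)
  then show ?thesis
    unfolding bialgebra_on_def Let_def
    using coassoc[unfolded comul_left_def comul_right_def] counit
    by (simp add: Mon_add keys_Delta Delta_add Delta_mult Delta_smult Delta_1 eps_add eps_mult eps_smult eps_1)
qed

end

section \<open>Identifying \<open>t\<^sub>\<bullet>\<close> with \<open>1\<close>\<close>

lemma comul_left_push_keys:
  assumes "\<And>x. D' (Poly_Mapping.single (q x) 1) = push_keys (map_prod q q) (D (Poly_Mapping.single x 1))"
  shows "comul_left D' (push_keys (map_prod q q) X) = push_keys (map_prod (map_prod q q) q) (comul_left D X)"
  unfolding comul_left_def lin_ext_push_keys push_keys_lin_ext
proof (intro lin_ext_cong)
  fix t :: "'a \<times> 'a"
  obtain x y where t: "t = (x, y)" by (cases t)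
  have "ptens (push_keys (map_prod q q) (D (Poly_Mapping.single x 1))) (push_keys q (Poly_Mapping.single y 1))
      = push_keys (map_prod (map_prod q q) q) (ptens (D (Poly_Mapping.single x 1)) (Poly_Mapping.single y 1))"
    by (simp only: ptens_push_keys map_prod_def)
  then show "(case map_prod q q t of (x, y) \<Rightarrow> ptens (D' (Poly_Mapping.single x 1)) (Poly_Mapping.single y 1))
      = push_keys (map_prod (map_prod q q) q) (case t of (x, y) \<Rightarrow> ptens (D (Poly_Mapping.single x 1)) (Poly_Mapping.single y 1))"
    by (simp add: t assms)
qed

lemma comul_right_push_keys:
  assumes "\<And>x. D' (Poly_Mapping.single (q x) 1) = push_keys (map_prod q q) (D (Poly_Mapping.single x 1))"
  shows "comul_right D' (push_keys (map_prod q q) X) = push_keys (map_prod q (map_prod q q)) (comul_right D X)"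
  unfolding comul_right_def lin_ext_push_keys push_keys_lin_ext
proof (intro lin_ext_cong)
  fix t :: "'a \<times> 'a"
  obtain x y where t: "t = (x, y)" by (cases t)
  have "ptens (push_keys q (Poly_Mapping.single x 1)) (push_keys (map_prod q q) (D (Poly_Mapping.single y 1)))
      = push_keys (map_prod q (map_prod q q)) (ptens (Poly_Mapping.single x 1) (D (Poly_Mapping.single y 1)))"
    by (simp only: ptens_push_keys map_prod_def)
  then show "(case map_prod q q t of (x, y) \<Rightarrow> ptens (Poly_Mapping.single x 1) (D' (Poly_Mapping.single y 1)))
      = push_keys (map_prod q (map_prod q q)) (case t of (x, y) \<Rightarrow> ptens (Poly_Mapping.single x 1) (D (Poly_Mapping.single y 1)))"
    by (simp add: t assms)
qed

lemma coassoc_push_keys: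
  assumes D': "\<And>x. D' (Poly_Mapping.single (q x) 1) = push_keys (map_prod q q) (D (Poly_Mapping.single x 1))"
    and coassoc: "push_keys reassoc (comul_left D X) = comul_right D X"
  shows "push_keys reassoc (comul_left D' (push_keys (map_prod q q) X))
    = comul_right D' (push_keys (map_prod q q) X)"
proof -
  have "reassoc \<circ> map_prod (map_prod q q) q = map_prod q (map_prod q q) \<circ> reassoc"
    by (auto simp: reassoc_def)
  then show ?thesis
    unfolding comul_left_push_keys[of D' q D, OF D'] comul_right_push_keys[of D' q D, OF D'] push_keys_push_keys
    by (metis coassoc push_keys_push_keys)
qed

context operad
begin

abbreviation "t_bullet \<equiv> bullet M Mf"
abbreviation "Mon_red \<equiv> monomials_over (Types - {t_bullet})"

definition drop_bullet :: "'s mon \<Rightarrow> 's mon" where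
  "drop_bullet \<mu> = filter_mset (\<lambda>\<alpha>. \<alpha> \<noteq> t_bullet) \<mu>"

lemma drop_bullet_add: "drop_bullet (x + y) = drop_bullet x + drop_bullet y"
  by (simp add: drop_bullet_def)

lemma drop_bullet_0 [simp]: "drop_bullet 0 = 0"
  by (simp add: drop_bullet_def)

lemma drop_bullet_add_mset:
  "drop_bullet (add_mset \<alpha> \<mu>) = (if \<alpha> = t_bullet then drop_bullet \<mu> else add_mset \<alpha> (drop_bullet \<mu>))"
  by (simp add: drop_bullet_def)

lemma drop_bullet_in: "\<mu> \<in> Mon \<Longrightarrow> drop_bullet \<mu> \<in> Mon_red"
  by (auto simp: monomials_over_def drop_bullet_def)

lemma drop_bullet_Mon_red: "\<mu> \<in> Mon_red \<Longrightarrow> drop_bullet \<mu> = \<mu>"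
  unfolding drop_bullet_def
  by (subst filter_mset_cong[of \<mu> \<mu> _ "\<lambda>_. True"]) (auto simp: monomials_over_def)

lemma eps_mon_drop_bullet: "eps_mon (drop_bullet \<mu>) = eps_mon \<mu>"
  by (auto simp: eps_mon_def drop_bullet_def)

lemma qmap_eq: "qmap t_bullet p = push_keys drop_bullet (p :: 's mon \<Rightarrow>\<^sub>0 'k::comm_ring_1)"
  by (simp add: qmap_def push_keys_def drop_bullet_def)

lemma qtens_eq: "qtens t_bullet X = push_keys (map_prod drop_bullet drop_bullet) (X :: 's mon \<times> 's mon \<Rightarrow>\<^sub>0 'k::comm_ring_1)"
  by (simp add: qtens_def push_keys_def drop_bullet_def split_def map_prod_def)

lemma push_keys_drop_bullet_mult:
  "push_keys (map_prod drop_bullet drop_bullet) (X * Y)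
    = push_keys (map_prod drop_bullet drop_bullet) X * (push_keys (map_prod drop_bullet drop_bullet) Y :: _ \<Rightarrow>\<^sub>0 'k::comm_ring_1)"
  by (rule push_keys_mult) (simp add: map_prod_def split_def drop_bullet_add)

lemma push_keys_drop_bullet_1:
  "push_keys (map_prod drop_bullet drop_bullet) (1 :: 's mon \<times> 's mon \<Rightarrow>\<^sub>0 'k::comm_ring_1) = 1"
  by (rule push_keys_1) (simp add: zero_prod_def)

lemma DeltaGen_bullet: "DeltaGen M Mf eta t_bullet = Poly_Mapping.single ({#t_bullet#}, {#t_bullet#}) (1::'k::comm_ring_1)"
proof -
  let ?u = "unit_str M {0}"
  have U: "finite {0::nat}" and u: "?u \<in> M {0}" by (auto intro: unit_str_in)
  have top_bullet: "snd (decomp_key x) = {#t_bullet#}" if dec: "x \<in> decomps {0} ?u" for x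
  proof -
    obtain \<pi> a m' where x: "x = (\<pi>, a, m')" "(\<pi>, a, m') \<in> subst M M {0}"
      using dec mem_decomps_iff by (cases x) auto
    have "\<pi> = {{0}}"
      using substD(1)[OF x(2)] partition_on_blocks[OF substD(1)[OF x(2)]]
      by (auto simp: partition_on_def subset_singleton_iff)
    then show ?thesis
      using tau_eq_bullet_iff[of "cd \<pi>" m'] substD(3)[OF x(2)] by (simp add: x(1) decomp_key_def cd_def)
  qed
  have "decomps {0} ?u = {whole_decomp {0} ?u}"
    using whole_decomp(1)[OF U u] decomps_eps_mon_snd[OF U, of _ ?u, where 'k='k] top_bullet
    by (force simp: eps_mon_def)
  moreover have "decomp_key (whole_decomp {0} ?u) = ({#t_bullet#}, {#t_bullet#})"
    using whole_decomp(2)[OF U u] top_bullet[OF whole_decomp(1)[OF U u]] by (simp add: prod_eq_iff bullet_def)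
  ultimately have "DeltaRep M Mf eta {0} ?u = Poly_Mapping.single ({#t_bullet#}, {#t_bullet#}) (1::'k)"
    by (simp add: DeltaRep_eq)
  then show ?thesis by (simp add: DeltaGen_tau[OF U u] bullet_def)
qed

lemma Delta_mon_add_mset: "Delta_mon (add_mset \<alpha> \<mu>) = DeltaGen M Mf eta \<alpha> * Delta_mon \<mu>"
  by (simp add: Delta_mon_def)

lemma Delta_mon_drop_bullet:
  "push_keys (map_prod drop_bullet drop_bullet) (Delta_mon (drop_bullet \<mu>) :: _ \<Rightarrow>\<^sub>0 'k::comm_ring_1)
    = push_keys (map_prod drop_bullet drop_bullet) (Delta_mon \<mu>)"
proof (induction \<mu>)
  case (add \<alpha> \<mu>)
  have bullet: "push_keys (map_prod drop_bullet drop_bullet) (DeltaGen M Mf eta t_bullet :: _ \<Rightarrow>\<^sub>0 'k) = 1"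
    by (simp add: DeltaGen_bullet drop_bullet_def zero_prod_def flip: single_one)
  show ?case
    using add.IH bullet
    by (cases "\<alpha> = t_bullet") (simp_all add: drop_bullet_add_mset Delta_mon_add_mset push_keys_drop_bullet_mult)
qed simp

definition Delta_red :: "('s mon \<Rightarrow>\<^sub>0 'k::comm_ring_1) \<Rightarrow> ('s mon \<times> 's mon \<Rightarrow>\<^sub>0 'k)" where
  "Delta_red p = push_keys (map_prod drop_bullet drop_bullet) (Delta M Mf eta p)"

lemma Delta_red_drop_bullet: "Delta_red (push_keys drop_bullet p) = (Delta_red p :: _ \<Rightarrow>\<^sub>0 'k::comm_ring_1)"
  by (simp add: Delta_red_def Delta_eq_lin_ext lin_ext_push_keys push_keys_lin_ext Delta_mon_drop_bullet)

lemma eps_drop_bullet: "eps M Mf (push_keys drop_bullet p) = (eps M Mf p :: 'k::comm_ring_1)"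
  using lin_ext_single_eps_mon[of "0::nat" "push_keys drop_bullet p"] lin_ext_single_eps_mon[of "0::nat" p]
  by (simp add: lin_ext_push_keys eps_mon_drop_bullet inj_eq[OF inj_single])

lemma Delta_red_add: "Delta_red (p + q) = Delta_red p + Delta_red q"
  and Delta_red_mult: "Delta_red (p * q) = Delta_red p * Delta_red q"
  and Delta_red_smult: "Delta_red (smult_pm c p) = smult_pm c (Delta_red p)"
  and Delta_red_1: "Delta_red 1 = 1"
  by (simp_all add: Delta_red_def Delta_add Delta_mult Delta_smult Delta_1 push_keys_add
      push_keys_drop_bullet_mult push_keys_smult push_keys_drop_bullet_1)

lemma Delta_red_single_drop_bullet:
  "Delta_red (Poly_Mapping.single (drop_bullet x) 1) = push_keys (map_prod drop_bullet drop_bullet) (Delta M Mf eta (Poly_Mapping.single x (1::'k::comm_ring_1)))"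
  using Delta_red_drop_bullet[of "Poly_Mapping.single x 1"] by (simp add: Delta_red_def)

lemma keys_Delta_red: "Poly_Mapping.keys p \<subseteq> Mon \<Longrightarrow> Poly_Mapping.keys (Delta_red p :: _ \<Rightarrow>\<^sub>0 'k::comm_ring_1) \<subseteq> Mon_red \<times> Mon_red"
  using keys_push_keys[of "map_prod drop_bullet drop_bullet" "Delta M Mf eta p :: _ \<Rightarrow>\<^sub>0 'k"] keys_Delta[of p] drop_bullet_in
  by (fastforce simp: Delta_red_def)

lemma push_keys_drop_bullet_Mon_red:
  assumes "Poly_Mapping.keys p \<subseteq> Mon_red"
  shows "push_keys drop_bullet p = p"
proof -
  have "push_keys drop_bullet p = lin_ext (\<lambda>x. Poly_Mapping.single x 1) p"
    unfolding push_keys_def using assms drop_bullet_Mon_red by (intro lin_ext_cong) auto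
  then show ?thesis by (simp add: lin_ext_id)
qed

lemma Delta_red_coassoc:
  assumes "Poly_Mapping.keys p \<subseteq> Mon"
  shows "push_keys reassoc (comul_left Delta_red (Delta_red p :: _ \<Rightarrow>\<^sub>0 'k::comm_ring_1)) = comul_right Delta_red (Delta_red p)"
  using coassoc_push_keys[OF Delta_red_single_drop_bullet Delta_coassoc[OF assms]]
  by (simp only: Delta_red_def[of p])

lemma counit_drop_bullet:
  "counit_left (push_keys (map_prod drop_bullet drop_bullet) X) = push_keys drop_bullet (counit_left X)"
  "counit_right (push_keys (map_prod drop_bullet drop_bullet) X) = push_keys drop_bullet (counit_right X)"
  by (simp_all add: counit_left_def counit_right_def lin_ext_push_keys push_keys_lin_ext eps_mon_drop_bullet
      split_def push_keys_smult)

lemma Delta_red_counit: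
  assumes p: "Poly_Mapping.keys p \<subseteq> Mon_red"
  shows "counit_left (Delta_red p) = (p :: _ \<Rightarrow>\<^sub>0 'k::comm_ring_1)" "counit_right (Delta_red p) = p"
proof -
  have "Poly_Mapping.keys p \<subseteq> Mon" using p by (auto simp: monomials_over_def)
  then show "counit_left (Delta_red p) = p" "counit_right (Delta_red p) = p"
    by (simp_all add: Delta_red_def counit_drop_bullet Delta_counit push_keys_drop_bullet_Mon_red[OF p])
qed

theorem bialgebra_red: "bialgebra_on Mon_red Delta_red (eps M Mf :: ('s mon \<Rightarrow>\<^sub>0 'k::comm_ring_1) \<Rightarrow> 'k)"
proof -
  have Mon: "Poly_Mapping.keys p \<subseteq> Mon" if "Poly_Mapping.keys p \<subseteq> Mon_red" for p :: "'s mon \<Rightarrow>\<^sub>0 'k"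
    using that by (auto simp: monomials_over_def)
  have coassoc: "Poly_Mapping.lookup (comul_left Delta_red (Delta_red p)) ((x, y), z)
      = Poly_Mapping.lookup (comul_right Delta_red (Delta_red p)) (x, y, z)"
    if "Poly_Mapping.keys p \<subseteq> Mon_red" for p :: "'s mon \<Rightarrow>\<^sub>0 'k" and x y z
    by (rule lookup_comul_left_right[OF Delta_red_coassoc[OF Mon[OF that]]])
  have counit: "lin_ext (\<lambda>(x, y). smult_pm (eps M Mf (Poly_Mapping.single x 1)) (Poly_Mapping.single y 1)) (Delta_red p) = p"
    "lin_ext (\<lambda>(x, y). smult_pm (eps M Mf (Poly_Mapping.single y 1)) (Poly_Mapping.single x 1)) (Delta_red p) = p"
    if "Poly_Mapping.keys p \<subseteq> Mon_red" for p :: "'s mon \<Rightarrow>\<^sub>0 'k"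
    using Delta_red_counit[OF that] by (simp_all add: counit_left_def counit_right_def eps_single)
  have "0 \<in> Mon_red" "x \<in> Mon_red \<Longrightarrow> y \<in> Mon_red \<Longrightarrow> x + y \<in> Mon_red" for x y
    by (auto simp: monomials_over_def)
  then show ?thesis
    unfolding bialgebra_on_def Let_def
    using coassoc[unfolded comul_left_def comul_right_def] counit keys_Delta_red[OF Mon]
    by (simp add: Delta_red_add Delta_red_mult Delta_red_smult Delta_red_1 eps_add eps_mult eps_smult eps_1)
qed

section \<open>The antipode\<close>

definition type_degree :: "(nat set \<times> 's) set \<Rightarrow> nat" where
  "type_degree \<alpha> = card (fst (SOME r. r \<in> \<alpha>)) - 1"

definition mon_degree :: "'s mon \<Rightarrow> nat" where
  "mon_degree \<mu> = sum_mset (image_mset type_degree \<mu>)"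

lemma mon_degree_add: "mon_degree (x + y) = mon_degree x + mon_degree y"
  by (simp add: mon_degree_def)

lemma type_degree_tau: "finite U \<Longrightarrow> m \<in> M U \<Longrightarrow> type_degree (tau M Mf U m) = card U - 1"
proof -
  assume U: "finite U" and m: "m \<in> M U"
  let ?r = "SOME r. r \<in> tau M Mf U m"
  have "?r \<in> tau M Mf U m" using tau_self_mem[OF U m] by (rule someI)
  then obtain V m' where r: "?r = (V, m')" "(V, m') \<in> tau M Mf U m" by (cases ?r) auto
  obtain f where "card V = card U" by (rule tau_memD[OF U m r(2)])
  then show ?thesis unfolding type_degree_def r(1) by simp
qed

lemma mon_degree_drop_bullet: "mon_degree (drop_bullet \<mu>) = mon_degree \<mu>"
proof -
  have "type_degree t_bullet = 0"
    using type_degree_tau[of "{0}" "unit_str M {0}"] unit_str_in[of "{0}"] by (simp add: bullet_def)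
  then show ?thesis
    by (induction \<mu>) (auto simp: drop_bullet_add_mset mon_degree_def)
qed

lemma mon_degree_pos: "\<mu> \<in> Mon_red \<Longrightarrow> \<mu> \<noteq> 0 \<Longrightarrow> 1 \<le> mon_degree \<mu>"
proof -
  assume \<mu>: "\<mu> \<in> Mon_red" "\<mu> \<noteq> 0"
  then obtain \<alpha> \<nu> where \<alpha>: "\<mu> = add_mset \<alpha> \<nu>" by (metis multiset_cases)
  then have "\<alpha> \<in> Types" "\<alpha> \<noteq> t_bullet" using \<mu>(1) by (auto simp: monomials_over_def)
  moreover obtain U m where U: "finite U" "m \<in> M U" "\<alpha> = tau M Mf U m"
    using Types_tau[OF \<open>\<alpha> \<in> Types\<close>] by blast
  ultimately have "card U \<noteq> 1" "card U \<noteq> 0"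
    using tau_eq_bullet_iff[OF U(1,2)] no_structures_empty by auto
  then have "2 \<le> card U" by linarith
  then show ?thesis using type_degree_tau[OF U(1,2)] by (simp add: \<alpha> U(3) mon_degree_def)
qed

lemma decomp_key_degree:
  assumes U: "finite U" and x: "x \<in> decomps U m"
  shows "mon_degree (fst (decomp_key x)) + mon_degree (snd (decomp_key x)) = card U - 1"
proof -
  obtain \<pi> a m' where xe: "x = (\<pi>, a, m')" by (cases x)
  have xs: "(\<pi>, a, m') \<in> subst M M U" using x xe mem_decomps_iff by auto
  note sD = substD[OF xs] and fin = subst_finite[OF xs U]
  have "mon_degree (fst (decomp_key x)) = (\<Sum>B\<in>\<pi>. card B - 1)"
    using fin sD(2) type_degree_tau
    by (simp add: xe decomp_key_def mon_degree_def image_mset.compositionality comp_def PiE_iff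
        flip: sum_unfold_sum_mset)
  moreover have "mon_degree (snd (decomp_key x)) = card \<pi> - 1"
    using type_degree_tau[OF fin(2) sD(3)] card_cd[of \<pi>] fin(3) by (simp add: xe decomp_key_def mon_degree_def)
  moreover have "card U = (\<Sum>B\<in>\<pi>. card B)"
    using product_partition[OF sD(1) fin(3)] .
  moreover have "(\<Sum>B\<in>\<pi>. card B) = (\<Sum>B\<in>\<pi>. card B - 1) + card \<pi>"
  proof -
    have "(\<Sum>B\<in>\<pi>. card B) = (\<Sum>B\<in>\<pi>. (card B - 1) + 1)"
      using partition_on_blocks(2)[OF sD(1)] fin(3) by (intro sum.cong refl) (simp add: Suc_le_eq card_gt_0_iff)
    also have "\<dots> = (\<Sum>B\<in>\<pi>. card B - 1) + (\<Sum>B\<in>\<pi>. 1)"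
      by (rule sum.distrib)
    finally show ?thesis by simp
  qed
  moreover have "\<pi> \<noteq> {}"
    using sD(1) eta_in[OF U xs] x no_structures_empty by (auto simp: xe mem_decomps_iff partition_on_def)
  then have "card \<pi> \<ge> 1" using fin(1) by (simp add: Suc_le_eq card_gt_0_iff)
  ultimately show ?thesis by linarith
qed

lemma keys_Delta_mon_degree:
  "\<mu> \<in> Mon \<Longrightarrow> Poly_Mapping.keys (Delta_mon \<mu> :: _ \<Rightarrow>\<^sub>0 'k::comm_ring_1) \<subseteq> {(x, y). mon_degree x + mon_degree y = mon_degree \<mu>}"
proof (induction rule: Mon_induct)
  case empty
  then show ?case by (simp add: zero_prod_def mon_degree_def)
next
  case (add U m \<nu>)
  have "Poly_Mapping.keys (DeltaRep M Mf eta U m :: _ \<Rightarrow>\<^sub>0 'k)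
      \<subseteq> (\<Union>x\<in>decomps U m. Poly_Mapping.keys (Poly_Mapping.single (decomp_key x) (1::'k)))"
    unfolding DeltaRep_eq by (rule keys_sum)
  also have "\<dots> \<subseteq> {(x, y). mon_degree x + mon_degree y = card U - 1}"
  proof (rule UN_least)
    fix x assume "x \<in> decomps U m"
    then show "Poly_Mapping.keys (Poly_Mapping.single (decomp_key x) (1::'k)) \<subseteq> {(x, y). mon_degree x + mon_degree y = card U - 1}"
      using decomp_key_degree[OF add(1)] by (cases "decomp_key x") fastforce
  qed
  finally have key_degrees: "Poly_Mapping.keys (DeltaRep M Mf eta U m :: _ \<Rightarrow>\<^sub>0 'k)
      \<subseteq> {(x, y). mon_degree x + mon_degree y = card U - 1}" .
  show ?case
  proof
    fix t assume "t \<in> Poly_Mapping.keys (Delta_mon (add_mset (tau M Mf U m) \<nu>) :: _ \<Rightarrow>\<^sub>0 'k)"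
    then obtain a b where t: "t = a + b" "a \<in> {(x, y). mon_degree x + mon_degree y = card U - 1}"
      "b \<in> {(x, y). mon_degree x + mon_degree y = mon_degree \<nu>}"
      using keys_mult_subset[OF key_degrees add(4)] by (auto simp: Delta_mon_add_tau[OF add(1,2)])
    have "mon_degree (add_mset (tau M Mf U m) \<nu>) = card U - 1 + mon_degree \<nu>"
      using type_degree_tau[OF add(1,2)] by (simp add: mon_degree_def)
    then show "t \<in> {(x, y). mon_degree x + mon_degree y = mon_degree (add_mset (tau M Mf U m) \<nu>)}"
      using t by (cases a, cases b) (simp add: mon_degree_add)
  qed
qed

lemma keys_Delta_red_degree:
  assumes "\<mu> \<in> Mon"
  shows "Poly_Mapping.keys (Delta_red (Poly_Mapping.single \<mu> (1::'k::comm_ring_1)))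
    \<subseteq> {(x, y). x \<in> Mon_red \<and> y \<in> Mon_red \<and> mon_degree x + mon_degree y = mon_degree \<mu>}"
  using keys_Delta_red[of "Poly_Mapping.single \<mu> 1"] assms
    keys_push_keys[of "map_prod drop_bullet drop_bullet" "Delta_mon \<mu> :: _ \<Rightarrow>\<^sub>0 'k"] keys_Delta_mon_degree[OF assms]
  by (fastforce simp: Delta_red_def Delta_single mon_degree_drop_bullet)

subsection \<open>Takeuchi's formula\<close>

abbreviation "conv \<equiv> convolution Delta_red"

definition unit_counit :: "'s mon \<Rightarrow> ('s mon \<Rightarrow>\<^sub>0 'k::comm_ring_1)" where
  "unit_counit \<mu> = Poly_Mapping.single 0 (eps_mon \<mu>)"

definition basis :: "'s mon \<Rightarrow> ('s mon \<Rightarrow>\<^sub>0 'k::comm_ring_1)" where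
  "basis \<mu> = Poly_Mapping.single \<mu> 1"

definition unit_counit_minus_id :: "'s mon \<Rightarrow> ('s mon \<Rightarrow>\<^sub>0 'k::comm_ring_1)" where
  "unit_counit_minus_id \<mu> = unit_counit \<mu> - basis \<mu>"

primrec conv_power :: "nat \<Rightarrow> 's mon \<Rightarrow> ('s mon \<Rightarrow>\<^sub>0 'k::comm_ring_1)" where
  "conv_power 0 = unit_counit"
| "conv_power (Suc n) = conv unit_counit_minus_id (conv_power n)"

text \<open>The geometric series \<open>S = \<Sum>\<^sub>n (\<eta>\<epsilon> - id)\<^sup>*\<^sup>n\<close> for the inverse of \<open>id = \<eta>\<epsilon> - (\<eta>\<epsilon> - id)\<close>;
  on a monomial of degree \<open>d\<close> only the terms with \<open>n \<le> d\<close> survive.\<close>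
definition antipode_mon :: "'s mon \<Rightarrow> ('s mon \<Rightarrow>\<^sub>0 'k::comm_ring_1)" where
  "antipode_mon \<mu> = (\<Sum>n\<le>mon_degree \<mu>. conv_power n \<mu>)"

lemma Mon_red_subset: "Mon_red \<subseteq> Mon"
  by (auto simp: monomials_over_def)

lemma conv_cong:
  assumes "\<mu> \<in> Mon"
    and "\<And>x y. x \<in> Mon_red \<Longrightarrow> y \<in> Mon_red \<Longrightarrow> mon_degree x + mon_degree y = mon_degree \<mu> \<Longrightarrow> F x * G y = F' x * G' y"
  shows "conv F G \<mu> = (conv F' G' \<mu> :: _ \<Rightarrow>\<^sub>0 'k::comm_ring_1)"
  unfolding convolution_def
  using keys_Delta_red_degree[OF assms(1), where 'k='k] assms(2) by (intro lin_ext_cong) auto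

lemma conv_unit_counit:
  assumes "\<mu> \<in> Mon_red"
  shows "conv F unit_counit \<mu> = (F \<mu> :: _ \<Rightarrow>\<^sub>0 'k::comm_ring_1)" "conv unit_counit F \<mu> = F \<mu>"
proof -
  have "Poly_Mapping.keys (Poly_Mapping.single \<mu> (1::'k)) \<subseteq> Mon_red" using assms by simp
  note counit = Delta_red_counit[OF this]
  have "conv F unit_counit \<mu> = lin_ext F (counit_right (Delta_red (Poly_Mapping.single \<mu> 1)))"
    "conv unit_counit F \<mu> = lin_ext F (counit_left (Delta_red (Poly_Mapping.single \<mu> 1)))"
    unfolding convolution_def unit_counit_def counit_left_def counit_right_def lin_ext_compose
    by (simp_all add: split_def smult_pm_eq_mult mult_single mult.commute[of _ "Poly_Mapping.single 0 _"])
  then show "conv F unit_counit \<mu> = F \<mu>" "conv unit_counit F \<mu> = F \<mu>"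
    by (simp_all add: counit)
qed

lemma conv_assoc:
  "\<mu> \<in> Mon \<Longrightarrow> conv (conv F G) H \<mu> = (conv F (conv G H) \<mu> :: _ \<Rightarrow>\<^sub>0 'k::comm_ring_1)"
  by (rule convolution_assoc[OF Delta_red_coassoc]) simp

lemma conv_power_vanishes: "\<mu> \<in> Mon_red \<Longrightarrow> mon_degree \<mu> < n \<Longrightarrow> conv_power n \<mu> = (0 :: _ \<Rightarrow>\<^sub>0 'k::comm_ring_1)"
proof (induction n arbitrary: \<mu>)
  case (Suc n)
  have "unit_counit_minus_id x * conv_power n y = (0 :: _ \<Rightarrow>\<^sub>0 'k)"
    if "x \<in> Mon_red" "y \<in> Mon_red" "mon_degree x + mon_degree y = mon_degree \<mu>" for x y
  proof (cases "x = 0")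
    case True
    then show ?thesis by (simp add: unit_counit_minus_id_def unit_counit_def basis_def)
  next
    case False
    then have "mon_degree y < n" using mon_degree_pos[OF that(1)] that(3) Suc.prems(2) by linarith
    then show ?thesis using Suc.IH[OF that(2)] by simp
  qed
  moreover have "\<mu> \<in> Mon" using Suc.prems(1) Mon_red_subset by blast
  ultimately have "conv unit_counit_minus_id (conv_power n) \<mu> = (0 :: _ \<Rightarrow>\<^sub>0 'k)"
    unfolding convolution_def using keys_Delta_red_degree[where 'k='k] by (intro lin_ext_eq_0) fastforce
  then show ?case by simp
qed simp

lemma conv_power_commute:
  "\<mu> \<in> Mon_red \<Longrightarrow> conv (conv_power n) unit_counit_minus_id \<mu> = (conv unit_counit_minus_id (conv_power n) \<mu> :: _ \<Rightarrow>\<^sub>0 'k::comm_ring_1)"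
proof (induction n arbitrary: \<mu>)
  case 0
  then show ?case by (simp add: conv_unit_counit)
next
  case (Suc n)
  then have "\<mu> \<in> Mon" using Mon_red_subset by blast
  then have "conv (conv_power (Suc n)) unit_counit_minus_id \<mu>
      = (conv unit_counit_minus_id (conv (conv_power n) unit_counit_minus_id) \<mu> :: _ \<Rightarrow>\<^sub>0 'k)"
    by (simp add: conv_assoc)
  also have "\<dots> = conv unit_counit_minus_id (conv unit_counit_minus_id (conv_power n)) \<mu>"
    using \<open>\<mu> \<in> Mon\<close> by (intro conv_cong) (simp_all add: Suc.IH)
  finally show ?case by simp
qed

lemma antipode_mon_eq:
  assumes "x \<in> Mon_red" "mon_degree x \<le> N"
  shows "antipode_mon x = (\<Sum>n\<le>N. conv_power n x :: _ \<Rightarrow>\<^sub>0 'k::comm_ring_1)"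
  unfolding antipode_mon_def using assms(2) by (intro sum.mono_neutral_left) (auto simp: conv_power_vanishes[OF assms(1)])

lemma basis_eq: "basis = (\<lambda>y. unit_counit y - (unit_counit_minus_id y :: _ \<Rightarrow>\<^sub>0 'k::comm_ring_1))"
  by (simp add: unit_counit_minus_id_def fun_eq_iff)

lemma antipode_mon_basis:
  assumes \<mu>: "\<mu> \<in> Mon_red"
  shows "conv antipode_mon basis \<mu> = (unit_counit \<mu> :: _ \<Rightarrow>\<^sub>0 'k::comm_ring_1)"
    "conv basis antipode_mon \<mu> = (unit_counit \<mu> :: _ \<Rightarrow>\<^sub>0 'k::comm_ring_1)"
proof -
  let ?N = "mon_degree \<mu>"
  have \<mu>': "\<mu> \<in> Mon" using \<mu> Mon_red_subset by blast
  have "conv antipode_mon basis \<mu> = (conv (\<lambda>x. \<Sum>n\<le>?N. conv_power n x) basis \<mu> :: _ \<Rightarrow>\<^sub>0 'k)"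
    by (intro conv_cong[OF \<mu>']) (metis antipode_mon_eq le_add1)
  also have "\<dots> = (\<Sum>n\<le>?N. conv_power n \<mu> - conv_power (Suc n) \<mu>)"
    unfolding convolution_sum_left basis_eq convolution_diff_right
    by (simp add: conv_unit_counit[OF \<mu>] conv_power_commute[OF \<mu>])
  also have "\<dots> = conv_power 0 \<mu> - conv_power (Suc ?N) \<mu>"
    by (rule sum_telescope)
  also have "\<dots> = unit_counit \<mu>"
    using conv_power_vanishes[OF \<mu>, of "Suc ?N"] by simp
  finally show "conv antipode_mon basis \<mu> = (unit_counit \<mu> :: _ \<Rightarrow>\<^sub>0 'k)" .
  have "conv basis antipode_mon \<mu> = (conv basis (\<lambda>x. \<Sum>n\<le>?N. conv_power n x) \<mu> :: _ \<Rightarrow>\<^sub>0 'k)"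
    by (intro conv_cong[OF \<mu>']) (metis antipode_mon_eq le_add2)
  also have "\<dots> = (\<Sum>n\<le>?N. conv_power n \<mu> - conv_power (Suc n) \<mu>)"
    unfolding convolution_sum_right basis_eq convolution_diff_left
    by (simp add: conv_unit_counit[OF \<mu>])
  also have "\<dots> = conv_power 0 \<mu> - conv_power (Suc ?N) \<mu>"
    by (rule sum_telescope)
  also have "\<dots> = unit_counit \<mu>"
    using conv_power_vanishes[OF \<mu>, of "Suc ?N"] by simp
  finally show "conv basis antipode_mon \<mu> = (unit_counit \<mu> :: _ \<Rightarrow>\<^sub>0 'k)" .
qed

lemma keys_conv:
  assumes "\<And>x. x \<in> Mon_red \<Longrightarrow> Poly_Mapping.keys (F x) \<subseteq> Mon_red"
    and "\<And>y. y \<in> Mon_red \<Longrightarrow> Poly_Mapping.keys (G y) \<subseteq> Mon_red" and \<mu>: "\<mu> \<in> Mon_red"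
  shows "Poly_Mapping.keys (conv F G \<mu> :: _ \<Rightarrow>\<^sub>0 'k::comm_ring_1) \<subseteq> Mon_red"
proof -
  have "Poly_Mapping.keys (F x * G y) \<subseteq> Mon_red" if "x \<in> Mon_red" "y \<in> Mon_red" for x y
    using keys_mult_subset[OF assms(1)[OF that(1)] assms(2)[OF that(2)]] by (fastforce simp: monomials_over_def)
  then show ?thesis
    unfolding convolution_def
    using keys_lin_ext[of "\<lambda>(x, y). F x * G y"] keys_Delta_red_degree[of \<mu>, where 'k='k] \<mu> Mon_red_subset
    by fastforce
qed

lemma keys_antipode_mon:
  assumes x: "x \<in> Mon_red"
  shows "Poly_Mapping.keys (antipode_mon x :: _ \<Rightarrow>\<^sub>0 'k::comm_ring_1) \<subseteq> Mon_red"
proof -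
  have unit: "Poly_Mapping.keys (unit_counit x :: _ \<Rightarrow>\<^sub>0 'k) \<subseteq> Mon_red" for x
    by (auto simp: unit_counit_def monomials_over_def)
  have minus: "Poly_Mapping.keys (unit_counit_minus_id x :: _ \<Rightarrow>\<^sub>0 'k) \<subseteq> Mon_red" if "x \<in> Mon_red" for x
  proof -
    have "Poly_Mapping.keys (unit_counit_minus_id x :: _ \<Rightarrow>\<^sub>0 'k) \<subseteq> Poly_Mapping.keys (unit_counit x :: _ \<Rightarrow>\<^sub>0 'k) \<union> {x}"
      by (auto simp: unit_counit_minus_id_def basis_def in_keys_iff lookup_minus lookup_single)
    then show ?thesis using unit[of x] that by blast
  qed
  have power: "Poly_Mapping.keys (conv_power n x :: _ \<Rightarrow>\<^sub>0 'k) \<subseteq> Mon_red" if "x \<in> Mon_red" for n x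
    using that
  proof (induction n arbitrary: x)
    case 0
    then show ?case using unit by simp
  next
    case (Suc n)
    then show ?case using keys_conv[OF minus Suc.IH Suc.prems] by simp
  qed
  have "Poly_Mapping.keys (antipode_mon x :: _ \<Rightarrow>\<^sub>0 'k) \<subseteq> (\<Union>n\<in>{..mon_degree x}. Poly_Mapping.keys (conv_power n x :: _ \<Rightarrow>\<^sub>0 'k))"
    unfolding antipode_mon_def by (rule keys_sum)
  then show ?thesis using power[OF x] by blast
qed

theorem hopf_red: "hopf_on Mon_red Delta_red (eps M Mf :: ('s mon \<Rightarrow>\<^sub>0 'k::comm_ring_1) \<Rightarrow> 'k)"
proof -
  let ?S = "lin_ext (antipode_mon :: _ \<Rightarrow> _ \<Rightarrow>\<^sub>0 'k)"
  have Delta_red_lin: "Delta_red p = lin_ext (\<lambda>\<mu>. Delta_red (Poly_Mapping.single \<mu> 1)) p" for p :: "_ \<Rightarrow>\<^sub>0 'k"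
    by (simp add: Delta_red_def Delta_eq_lin_ext push_keys_lin_ext)
  have "lin_ext (\<lambda>(x, y). ?S (Poly_Mapping.single x 1) * Poly_Mapping.single y 1) (Delta_red p) = smult_pm (eps M Mf p) 1"
    "lin_ext (\<lambda>(x, y). Poly_Mapping.single x 1 * ?S (Poly_Mapping.single y 1)) (Delta_red p) = smult_pm (eps M Mf p) 1"
    if "Poly_Mapping.keys p \<subseteq> Mon_red" for p
  proof -
    have "lin_ext (\<lambda>(x, y). ?S (Poly_Mapping.single x 1) * Poly_Mapping.single y 1) (Delta_red p)
        = lin_ext (conv antipode_mon basis) p"
      "lin_ext (\<lambda>(x, y). Poly_Mapping.single x 1 * ?S (Poly_Mapping.single y 1)) (Delta_red p)
        = lin_ext (conv basis antipode_mon) p"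
      by (subst Delta_red_lin[of p], simp add: lin_ext_compose convolution_def[abs_def] basis_def split_def)+
    moreover have "lin_ext (conv antipode_mon basis) p = lin_ext unit_counit p"
      "lin_ext (conv basis antipode_mon) p = lin_ext unit_counit p"
      using that antipode_mon_basis by (auto intro: lin_ext_cong)
    moreover have "lin_ext unit_counit p = smult_pm (eps M Mf p) 1"
      unfolding unit_counit_def lin_ext_single_eps_mon by (simp flip: single_one)
    ultimately show "lin_ext (\<lambda>(x, y). ?S (Poly_Mapping.single x 1) * Poly_Mapping.single y 1) (Delta_red p) = smult_pm (eps M Mf p) 1"
      "lin_ext (\<lambda>(x, y). Poly_Mapping.single x 1 * ?S (Poly_Mapping.single y 1)) (Delta_red p) = smult_pm (eps M Mf p) 1"
      by simp_all
  qed
  moreover have "Poly_Mapping.keys (?S p) \<subseteq> Mon_red" if "Poly_Mapping.keys p \<subseteq> Mon_red" for p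
    using keys_lin_ext[of antipode_mon p] keys_antipode_mon that by blast
  ultimately show ?thesis
    unfolding hopf_on_def Let_def using bialgebra_red
    by (intro conjI exI[of _ ?S]) (auto simp: lin_ext_add lin_ext_smult)
qed

end

theorem mainTheorem1:
  fixes M :: "nat set \<Rightarrow> 's set"
    and Mf :: "(nat \<Rightarrow> nat) \<Rightarrow> nat set \<Rightarrow> 's \<Rightarrow> 's"
    and eta :: "nat set \<Rightarrow> nat set set \<Rightarrow> (nat set \<Rightarrow> 's) \<Rightarrow> 's \<Rightarrow> 's"
  assumes op: "set_operad M Mf eta"
  defines "T \<equiv> stypes M Mf"
    and "D \<equiv> (Delta M Mf eta :: ((nat set \<times> 's) set multiset \<Rightarrow>\<^sub>0 'k::field_char_0) \<Rightarrow> _)"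
    and "e \<equiv> (eps M Mf :: ((nat set \<times> 's) set multiset \<Rightarrow>\<^sub>0 'k) \<Rightarrow> 'k)"
  shows
    "(\<forall>U m V m'. finite U \<and> m \<in> M U \<and> (V, m') \<in> tau M Mf U m \<longrightarrow>
        (DeltaRep M Mf eta U m :: (_ \<Rightarrow>\<^sub>0 'k)) = DeltaRep M Mf eta V m') \<and>
     bialgebra_on (monomials_over T) D e \<and>
     (\<forall>p. Poly_Mapping.keys p \<subseteq> monomials_over T \<longrightarrow>
        qtens (bullet M Mf) (D (qmap (bullet M Mf) p)) = qtens (bullet M Mf) (D p) \<and>
        e (qmap (bullet M Mf) p) = e p) \<and>
     hopf_on (monomials_over (T - {bullet M Mf})) (\<lambda>p. qtens (bullet M Mf) (D p)) e"
proof -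
  interpret operad M Mf eta by (rule operad.intro) (rule op)
  have "\<forall>U m V m'. finite U \<and> m \<in> M U \<and> (V, m') \<in> tau M Mf U m \<longrightarrow>
      (DeltaRep M Mf eta U m :: (_ \<Rightarrow>\<^sub>0 'k)) = DeltaRep M Mf eta V m'"
    using DeltaRep_tau_eq by metis
  moreover have "bialgebra_on (monomials_over T) D e"
    unfolding T_def D_def e_def by (rule bialgebra)
  moreover have "\<forall>p. Poly_Mapping.keys p \<subseteq> monomials_over T \<longrightarrow>
      qtens (bullet M Mf) (D (qmap (bullet M Mf) p)) = qtens (bullet M Mf) (D p) \<and> e (qmap (bullet M Mf) p) = e p"
    unfolding D_def e_def by (simp add: qmap_eq qtens_eq Delta_red_drop_bullet[unfolded Delta_red_def] eps_drop_bullet)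
  moreover have "(\<lambda>p. qtens (bullet M Mf) (D p)) = Delta_red"
    by (simp add: D_def fun_eq_iff Delta_red_def qtens_eq)
  then have "hopf_on (monomials_over (T - {bullet M Mf})) (\<lambda>p. qtens (bullet M Mf) (D p)) e"
    unfolding T_def e_def by (simp add: hopf_red)
  ultimately show ?thesis by blast
qed

end
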